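(* There is a constant $C>0$ such that the following holds. Let $\epsilon\in(0,1)$, $\ell,q\ge0$ integers, and $\mathcal B=(\mathcal L,\mathcal Q)$ a quadratic factor on $G=\mathbb{F}_p^n$ of complexity $(\ell,q)$ and rank at least $C(\ell+q+\log_p(\epsilon^{-1}))$. Fix $e\in\mathbb{F}_p^\ell\times\mathbb{F}_p^q$ and $d\in(\mathbb{F}_p^\ell\times\mathbb{F}_p^q)^3\times(\mathbb{F}_p^q)^3$ with $\Sigma(d)=e$, and put $B=B(e)$. Then for all $(w,h_a,h_b,h_c)\in\Omega_B$, $$|\Psi^{-1}(w,h_a,h_b,h_c)\cap K_{2,2,2}(d)|\le(1+\epsilon)p^{2n-2\ell-3q}.$$ Moreover, if the family $\mathcal L\cup\{Mw,Mh_a,Mh_b,Mh_c:M\in\mathcal Q\}$ is linearly independent, then $$|\Psi^{-1}(w,h_a,h_b,h_c)\cap K_{2,2,2}(d)|=(1\pm\epsilon)p^{2n-2\ell-11q}.$$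
   Context: $p$ is an odd prime. Quadratic factors: For $\ell\ge1$, a linear factor of complexity $\ell$ on $\mathbb{F}_p^n$ is a linearly independent set $\mathcal{L}=\{r_1,\dots,r_\ell\}\subseteq\mathbb{F}_p^n$ (with a fixed enumeration); the linear factor of complexity $0$ is $\emptyset$. Put $\beta_{\mathcal L}(x)=(x\cdot r_1,\dots,x\cdot r_\ell)\in\mathbb{F}_p^\ell$ (the zero map to $\mathbb{F}_p^0$ if $\ell=0$). For $q\ge 1$, a purely quadratic factor of complexity $q$ is a set $\mathcal{Q}=\{M_1,\dots,M_q\}$ of pairwise distinct symmetric $n\times n$ matrices over $\mathbb{F}_p$ (the empty set if $q=0$); put $\beta_{\mathcal Q}(x,y)=(x^TM_1y,\dots,x^TM_qy)\in\mathbb{F}_p^q$. The rank of $\mathcal Q$ is $n$ if $q=0$, and otherwise the minimum of $\mathrm{rk}(\lambda_1M_1+\dots+\lambda_qM_q)$ over $(\lambda_1,\dots,\lambda_q)\neq 0$. A quadratic factor of complexity $(\ell,q)$ is a pair $\mathcal{B}=(\mathcal L,\mathcal Q)$ of these; its rank is the rank of $\mathcal Q$; $\beta_{\mathcal B}(x)=(\beta_{\mathcal L}(x),\beta_{\mathcal Q}(x,x))$; its atoms are the sets $B(a,b)=\beta_{\mathcal B}^{-1}(a,b)$. For $d=(d_a,d_b,d_c,d_{ab},d_{ac},d_{bc})$, $\Sigma(d)=d_a+d_b+d_c+2(0,d_{ab})+2(0,d_{ac})+2(0,d_{bc})$, where $(0,u)$ prepends $\ell$ zeros. $\Omega_B=\{(x,h_1,h_2,h_3)\in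 G^4: x+\omega_1h_1+\omega_2h_2+\omega_3h_3\in B\text{ for all }\omega\in\{0,1\}^3\}$. $\Psi:G^6\to G^4$, $\Psi(x_1,x_2,y_1,y_2,z_1,z_2)=(x_1+y_1+z_1,x_2-x_1,y_2-y_1,z_2-z_1)$. $K_{2,2,2}(d)$ is the set of $(x_1,x_2,y_1,y_2,z_1,z_2)\in G^6$ such that $\beta_{\mathcal B}(x_i)=d_a$, $\beta_{\mathcal B}(y_i)=d_b$, $\beta_{\mathcal B}(z_i)=d_c$ for $i\in[2]$, and $\beta_{\mathcal Q}(x_i,y_j)=d_{ab}$, $\beta_{\mathcal Q}(x_i,z_j)=d_{ac}$, $\beta_{\mathcal Q}(y_i,z_j)=d_{bc}$ for all $(i,j)\in[2]^2$. "Linearly independent" refers to the family (list) of vectors. *)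

theory Defs
  imports Complex_Main "HOL-Computational_Algebra.Primes"
begin

text \<open>Explicit model of F_p and F_p^n, so that the constant C can be quantified
 before p and n.\<close>

definition Fp :: "nat \<Rightarrow> int set" where
  "Fp p = {0..<int p}"

definition vecs :: "nat \<Rightarrow> nat \<Rightarrow> (nat \<Rightarrow> int) set" where
  "vecs p n = {x. (\<forall>i<n. x i \<in> Fp p) \<and> (\<forall>i\<ge>n. x i = 0)}"

definition is_mat :: "nat \<Rightarrow> nat \<Rightarrow> (nat \<Rightarrow> nat \<Rightarrow> int) \<Rightarrow> bool" where
  "is_mat p n M \<longleftrightarrow> (\<forall>i j. (i < n \<and> j < n \<longrightarrow> M i j \<in> Fp p) \<and> (\<not>(i < n \<and> j < n) \<longrightarrow> M i j = 0))"

definition is_sym :: "(nat \<Rightarrow> nat \<Rightarrow> int) \<Rightarrow> bool" where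
  "is_sym M \<longleftrightarrow> (\<forall>i j. M i j = M j i)"

definition vzero :: "nat \<Rightarrow> int" where
  "vzero = (\<lambda>i. 0)"

definition vadd :: "nat \<Rightarrow> (nat \<Rightarrow> int) \<Rightarrow> (nat \<Rightarrow> int) \<Rightarrow> (nat \<Rightarrow> int)" where
  "vadd p x y = (\<lambda>i. (x i + y i) mod int p)"

definition vsub :: "nat \<Rightarrow> (nat \<Rightarrow> int) \<Rightarrow> (nat \<Rightarrow> int) \<Rightarrow> (nat \<Rightarrow> int)" where
  "vsub p x y = (\<lambda>i. (x i - y i) mod int p)"

definition dotp :: "nat \<Rightarrow> nat \<Rightarrow> (nat \<Rightarrow> int) \<Rightarrow> (nat \<Rightarrow> int) \<Rightarrow> int" where
  "dotp p n x r = (\<Sum>i<n. x i * r i) mod int p"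

definition bil :: "nat \<Rightarrow> nat \<Rightarrow> (nat \<Rightarrow> nat \<Rightarrow> int) \<Rightarrow> (nat \<Rightarrow> int) \<Rightarrow> (nat \<Rightarrow> int) \<Rightarrow> int" where
  "bil p n M x y = (\<Sum>i<n. \<Sum>j<n. x i * M i j * y j) mod int p"

definition mvec :: "nat \<Rightarrow> nat \<Rightarrow> (nat \<Rightarrow> nat \<Rightarrow> int) \<Rightarrow> (nat \<Rightarrow> int) \<Rightarrow> (nat \<Rightarrow> int)" where
  "mvec p n M w = (\<lambda>i. if i < n then (\<Sum>j<n. M i j * w j) mod int p else 0)"

definition lin_indep :: "nat \<Rightarrow> nat \<Rightarrow> (nat \<Rightarrow> int) list \<Rightarrow> bool" where
  "lin_indep p n vs \<longleftrightarrow>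
     (\<forall>c :: nat \<Rightarrow> int. (\<forall>k<length vs. c k \<in> Fp p) \<and>
        (\<forall>i<n. (\<Sum>k<length vs. c k * (vs ! k) i) mod int p = 0)
        \<longrightarrow> (\<forall>k<length vs. c k = 0))"

definition mrow :: "nat \<Rightarrow> nat \<Rightarrow> (nat \<Rightarrow> nat \<Rightarrow> int) \<Rightarrow> nat \<Rightarrow> (nat \<Rightarrow> int)" where
  "mrow p n M i = (\<lambda>j. if j < n then M i j mod int p else 0)"

definition mrank :: "nat \<Rightarrow> nat \<Rightarrow> (nat \<Rightarrow> nat \<Rightarrow> int) \<Rightarrow> nat" where
  "mrank p n M = Max {k. \<exists>is. length is = k \<and> (\<forall>i\<in>set is. i < n) \<and>
                              lin_indep p n (map (mrow p n M) is)}"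

definition mlincomb :: "nat \<Rightarrow> nat \<Rightarrow> (nat \<Rightarrow> int) \<Rightarrow> (nat \<Rightarrow> nat \<Rightarrow> int) list \<Rightarrow> (nat \<Rightarrow> nat \<Rightarrow> int)" where
  "mlincomb p n lam Ms = (\<lambda>i j. if i < n \<and> j < n then (\<Sum>k<length Ms. lam k * (Ms ! k) i j) mod int p else 0)"

definition qrank :: "nat \<Rightarrow> nat \<Rightarrow> (nat \<Rightarrow> nat \<Rightarrow> int) list \<Rightarrow> nat" where
  "qrank p n Ms = (if Ms = [] then n else
     Min {mrank p n (mlincomb p n lam Ms) | lam.
            (\<forall>k<length Ms. lam k \<in> Fp p) \<and> (\<forall>k\<ge>length Ms. lam k = 0) \<and> (\<exists>k<length Ms. lam k \<noteq> 0)})"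

definition linear_factor :: "nat \<Rightarrow> nat \<Rightarrow> (nat \<Rightarrow> int) list \<Rightarrow> bool" where
  "linear_factor p n Ls \<longleftrightarrow> set Ls \<subseteq> vecs p n \<and> lin_indep p n Ls"

definition quad_factor :: "nat \<Rightarrow> nat \<Rightarrow> (nat \<Rightarrow> nat \<Rightarrow> int) list \<Rightarrow> bool" where
  "quad_factor p n Ms \<longleftrightarrow> distinct Ms \<and> (\<forall>M\<in>set Ms. is_mat p n M \<and> is_sym M)"

definition betaL :: "nat \<Rightarrow> nat \<Rightarrow> (nat \<Rightarrow> int) list \<Rightarrow> (nat \<Rightarrow> int) \<Rightarrow> int list" where
  "betaL p n Ls x = map (\<lambda>r. dotp p n x r) Ls"

definition betaQ :: "nat \<Rightarrow> nat \<Rightarrow> (nat \<Rightarrow> nat \<Rightarrow> int) list \<Rightarrow> (nat \<Rightarrow> int) \<Rightarrow> (nat \<Rightarrow> int) \<Rightarrow> int list" where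
  "betaQ p n Ms x y = map (\<lambda>M. bil p n M x y) Ms"

definition betaB :: "nat \<Rightarrow> nat \<Rightarrow> (nat \<Rightarrow> int) list \<Rightarrow> (nat \<Rightarrow> nat \<Rightarrow> int) list \<Rightarrow> (nat \<Rightarrow> int) \<Rightarrow> int list \<times> int list" where
  "betaB p n Ls Ms x = (betaL p n Ls x, betaQ p n Ms x x)"

definition fvec :: "nat \<Rightarrow> nat \<Rightarrow> int list \<Rightarrow> bool" where
  "fvec p m u \<longleftrightarrow> length u = m \<and> set u \<subseteq> Fp p"

definition ladd :: "nat \<Rightarrow> int list \<Rightarrow> int list \<Rightarrow> int list" where
  "ladd p u v = map2 (\<lambda>a b. (a + b) mod int p) u v"

definition padd :: "nat \<Rightarrow> int list \<times> int list \<Rightarrow> int list \<times> int list \<Rightarrow> int list \<times> int list" where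
  "padd p a b = (ladd p (fst a) (fst b), ladd p (snd a) (snd b))"

definition twozero :: "nat \<Rightarrow> nat \<Rightarrow> int list \<Rightarrow> int list \<times> int list" where
  "twozero p l u = (replicate l 0, map (\<lambda>a. (2 * a) mod int p) u)"

definition Sigma_d :: "nat \<Rightarrow> nat \<Rightarrow>
   (int list \<times> int list) \<times> (int list \<times> int list) \<times> (int list \<times> int list) \<times> int list \<times> int list \<times> int list
   \<Rightarrow> int list \<times> int list" where
  "Sigma_d p l d = (case d of (da, db, dc, dab, dac, dbc) \<Rightarrow>
     padd p (padd p (padd p (padd p (padd p da db) dc) (twozero p l dab)) (twozero p l dac)) (twozero p l dbc))"

definition atom :: "nat \<Rightarrow> nat \<Rightarrow> (nat \<Rightarrow> int) list \<Rightarrow> (nat \<Rightarrow> nat \<Rightarrow> int) list \<Rightarrow> int list \<times> int list \<Rightarrow> (nat \<Rightarrow> int) set" where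
  "atom p n Ls Ms e = {x \<in> vecs p n. betaB p n Ls Ms x = e}"

definition sel :: "bool \<Rightarrow> (nat \<Rightarrow> int) \<Rightarrow> (nat \<Rightarrow> int)" where
  "sel b h = (if b then h else vzero)"

definition Omega :: "nat \<Rightarrow> nat \<Rightarrow> (nat \<Rightarrow> int) set \<Rightarrow>
     ((nat \<Rightarrow> int) \<times> (nat \<Rightarrow> int) \<times> (nat \<Rightarrow> int) \<times> (nat \<Rightarrow> int)) set" where
  "Omega p n B = {(x, h1, h2, h3). x \<in> vecs p n \<and> h1 \<in> vecs p n \<and> h2 \<in> vecs p n \<and> h3 \<in> vecs p n \<and>
      (\<forall>w1 w2 w3. vadd p (vadd p (vadd p x (sel w1 h1)) (sel w2 h2)) (sel w3 h3) \<in> B)}"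

type_synonym vec6 = "(nat \<Rightarrow> int) \<times> (nat \<Rightarrow> int) \<times> (nat \<Rightarrow> int) \<times> (nat \<Rightarrow> int) \<times> (nat \<Rightarrow> int) \<times> (nat \<Rightarrow> int)"

definition Psi :: "nat \<Rightarrow> vec6 \<Rightarrow> (nat \<Rightarrow> int) \<times> (nat \<Rightarrow> int) \<times> (nat \<Rightarrow> int) \<times> (nat \<Rightarrow> int)" where
  "Psi p t = (case t of (x1, x2, y1, y2, z1, z2) \<Rightarrow>
     (vadd p (vadd p x1 y1) z1, vsub p x2 x1, vsub p y2 y1, vsub p z2 z1))"

definition K222 :: "nat \<Rightarrow> nat \<Rightarrow> (nat \<Rightarrow> int) list \<Rightarrow> (nat \<Rightarrow> nat \<Rightarrow> int) list \<Rightarrow>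
   (int list \<times> int list) \<times> (int list \<times> int list) \<times> (int list \<times> int list) \<times> int list \<times> int list \<times> int list
   \<Rightarrow> vec6 set" where
  "K222 p n Ls Ms d = (case d of (da, db, dc, dab, dac, dbc) \<Rightarrow>
     {(x1, x2, y1, y2, z1, z2). x1 \<in> vecs p n \<and> x2 \<in> vecs p n \<and> y1 \<in> vecs p n \<and>
        y2 \<in> vecs p n \<and> z1 \<in> vecs p n \<and> z2 \<in> vecs p n \<and>
        (\<forall>x\<in>{x1, x2}. betaB p n Ls Ms x = da) \<and>
        (\<forall>y\<in>{y1, y2}. betaB p n Ls Ms y = db) \<and>
        (\<forall>z\<in>{z1, z2}. betaB p n Ls Ms z = dc) \<and>
        (\<forall>x\<in>{x1, x2}. \<forall>y\<in>{y1, y2}. betaQ p n Ms x y = dab) \<and>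
        (\<forall>x\<in>{x1, x2}. \<forall>z\<in>{z1, z2}. betaQ p n Ms x z = dac) \<and>
        (\<forall>y\<in>{y1, y2}. \<forall>z\<in>{z1, z2}. betaQ p n Ms y z = dbc)})"

end

theory Submission
  imports Defs
begin

text \<open>
  Write a point of the fibre of Psi over (w, h_a, h_b, h_c) as (x, x + h_a, y, y + h_b, z, z + h_c)
  with z = w - x - y. Because all eight vertices w + \<omega> \<cdot> h lie in B and \<Sigma>(d) = e, the
  conditions defining K_{2,2,2}(d) collapse to linear conditions on x and y (those of the linear
  factor, together with the pairings of x and y with M w, M h_a, M h_b, M h_c) plus the three
  quadratic equations x^T M x = d_a, y^T M y = d_b, x^T M y = d_ab for each M in the factor.

  On a product X \<times> Y of affine subspaces such a system of 3q quadratic equations has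
  |X| |Y| p^(-3q) solutions up to an error p^(2n - r/2): expanding the indicator in additive
  characters, every non-trivial character gives the exponential sum of a quadratic phase,
  whose square is bounded by Weyl differencing by p^(2n) times the size of the radical of
  the phase, and a rank-r combination of the forms has a radical of size at most p^(2n - r).
  Keeping only the conditions from the linear factor gives the upper bound; under the
  independence hypothesis |X| = |Y| = p^(n - l - 4q), which gives the asymptotic. The rank
  hypothesis with C = 22 makes the error at most \<epsilon> times the main term.
\<close>

section \<open>Additive characters of F_p\<close>

definition addchar :: "nat \<Rightarrow> int \<Rightarrow> complex" where
  "addchar p t = cis (2 * pi * of_int t / of_nat p)"

lemma addchar_add: "addchar p (a + b) = addchar p a * addchar p b"
  unfolding addchar_def by (simp add: cis_mult add_divide_distrib distrib_left)

lemma addchar_0 [simp]: "addchar p 0 = 1"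
  unfolding addchar_def by simp

lemma norm_addchar [simp]: "norm (addchar p t) = 1"
  unfolding addchar_def by simp

lemma addchar_diff: "addchar p (a - b) = addchar p a * cnj (addchar p b)"
  unfolding addchar_def by (simp add: cis_cnj cis_mult diff_divide_distrib right_diff_distrib)

lemma addchar_sum: "addchar p (\<Sum>i\<in>A. f i) = (\<Prod>i\<in>A. addchar p (f i))"
  by (induction A rule: infinite_finite_induct) (auto simp: addchar_add)

lemma addchar_power: "addchar p c ^ k = addchar p (int k * c)"
  unfolding addchar_def by (simp add: DeMoivre mult.assoc mult.left_commute)

lemma addchar_eq_1_iff:
  assumes "p > 0"
  shows "addchar p c = 1 \<longleftrightarrow> int p dvd c"
proof
  assume "addchar p c = 1"
  hence "cos (2 * pi * of_int c / of_nat p) = 1"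
    unfolding addchar_def by (metis cis.sel(1) one_complex.sel(1))
  then obtain m :: int where "2 * pi * of_int c / of_nat p = of_int m * 2 * pi"
    using cos_one_2pi_int by blast
  hence "of_int c = (of_int (m * int p) :: real)"
    using assms by (simp add: field_simps)
  hence "c = m * int p" by linarith
  thus "int p dvd c" by simp
next
  assume "int p dvd c"
  then obtain k where "c = int p * k" by blast
  hence "2 * pi * of_int c / of_nat p = 2 * pi * of_int k"
    using assms by (simp add: field_simps)
  thus "addchar p c = 1" unfolding addchar_def by simp
qed

lemma addchar_cong:
  assumes "p > 0" "a mod int p = b mod int p"
  shows "addchar p a = addchar p b"
proof -
  have "int p dvd a - b" using assms(2) by (simp add: mod_eq_dvd_iff)
  hence "addchar p (a - b) = 1" using addchar_eq_1_iff[OF assms(1)] by blast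
  thus ?thesis by (metis add.commute addchar_add diff_add_cancel mult_1)
qed

lemma sum_Fp_addchar:
  assumes "p > 0"
  shows "(\<Sum>a\<in>Fp p. addchar p (a * c)) = (if int p dvd c then of_nat p else 0)"
proof -
  have "(\<Sum>a\<in>Fp p. addchar p (a * c)) = (\<Sum>k<p. addchar p c ^ k)"
  proof -
    have "Fp p = int ` {..<p}" unfolding Fp_def by (simp add: image_int_atLeastLessThan lessThan_atLeast0)
    thus ?thesis by (simp add: sum.reindex addchar_power)
  qed
  moreover have "addchar p c ^ p = 1"
    using addchar_eq_1_iff[OF assms] by (simp add: addchar_power)
  ultimately show ?thesis
    using addchar_eq_1_iff[OF assms, of c] geometric_sum[of "addchar p c" p] by auto
qed

lemma sum_mod_cong:
  fixes f g :: "'a \<Rightarrow> int"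
  assumes "\<And>i. i \<in> A \<Longrightarrow> f i mod m = g i mod m"
  shows "sum f A mod m = sum g A mod m"
  by (metis (no_types, lifting) assms mod_sum_eq sum.cong)

lemma mod_mult_middle: "(a * b * c) mod m = (a * (b mod m) * c) mod (m::int)"
  by (metis mod_mult_left_eq mod_mult_right_eq)

lemma Fp_mod: "a \<in> Fp p \<Longrightarrow> a mod int p = a"
  unfolding Fp_def by simp

lemma finite_Fp [simp]: "finite (Fp p)"
  unfolding Fp_def by simp

lemma vecs_0: "vecs p 0 = {vzero}"
  unfolding vecs_def vzero_def by auto

lemma vecs_Suc: "vecs p (Suc m) = (\<lambda>(c, a). c(m := a)) ` (vecs p m \<times> Fp p)"
proof (rule set_eqI, rule iffI)
  fix x assume x: "x \<in> vecs p (Suc m)"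
  have "x = (\<lambda>(c, a). c(m := a)) (x(m := 0), x m)" by simp
  moreover have "(x(m := 0), x m) \<in> vecs p m \<times> Fp p"
    using x unfolding vecs_def by auto
  ultimately show "x \<in> (\<lambda>(c, a). c(m := a)) ` (vecs p m \<times> Fp p)" by blast
next
  fix x assume "x \<in> (\<lambda>(c, a). c(m := a)) ` (vecs p m \<times> Fp p)"
  thus "x \<in> vecs p (Suc m)" unfolding vecs_def by (auto simp: less_Suc_eq)
qed

lemma inj_on_vecs_Suc: "inj_on (\<lambda>(c, a). c(m := a)) (vecs p m \<times> Fp p)"
proof (rule inj_onI, clarify)
  fix c a c' a' assume c: "c \<in> vecs p m" "c' \<in> vecs p m" and eq: "c(m := a) = c'(m := a')"
  have "c i = c' i" for i
    using fun_cong[OF eq, of i] c unfolding vecs_def by (cases "i = m") auto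
  thus "c = c' \<and> a = a'" using fun_cong[OF eq, of m] by auto
qed

lemma finite_vecs [simp]: "finite (vecs p n)"
  by (induction n) (auto simp: vecs_0 vecs_Suc)

lemma vzero_in_vecs [simp]: "p > 0 \<Longrightarrow> vzero \<in> vecs p n"
  unfolding vecs_def vzero_def Fp_def by auto

lemma vecs_eq_vzero_iff:
  assumes "c \<in> vecs p m"
  shows "c = vzero \<longleftrightarrow> (\<forall>k<m. c k = 0)"
proof
  assume "\<forall>k<m. c k = 0"
  hence "c k = 0" for k using assms unfolding vecs_def by (cases "k < m") auto
  thus "c = vzero" unfolding vzero_def by blast
qed (simp add: vzero_def)

lemma sum_vecs_prod:
  fixes f :: "nat \<Rightarrow> int \<Rightarrow> 'b::comm_semiring_1"
  shows "(\<Sum>c\<in>vecs p m. \<Prod>j<m. f j (c j)) = (\<Prod>j<m. \<Sum>a\<in>Fp p. f j a)"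
proof (induction m)
  case 0
  then show ?case by (simp add: vecs_0)
next
  case (Suc m)
  have "(\<Sum>c\<in>vecs p (Suc m). \<Prod>j<Suc m. f j (c j))
      = (\<Sum>(c, a)\<in>vecs p m \<times> Fp p. \<Prod>j<Suc m. f j ((c(m := a)) j))"
    unfolding vecs_Suc by (subst sum.reindex[OF inj_on_vecs_Suc]) (simp add: case_prod_unfold)
  also have "\<dots> = (\<Sum>(c, a)\<in>vecs p m \<times> Fp p. (\<Prod>j<m. f j (c j)) * f m a)"
    by (intro sum.cong refl) (auto intro!: prod.cong)
  also have "\<dots> = (\<Sum>c\<in>vecs p m. \<Prod>j<m. f j (c j)) * (\<Sum>a\<in>Fp p. f m a)"
    by (simp add: sum_product sum.cartesian_product)
  finally show ?case using Suc by simp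
qed

lemma card_vecs: "card (vecs p n) = p ^ n"
  using sum_vecs_prod[where f = "\<lambda>_ _. 1 :: nat" and p = p and m = n] by (simp add: Fp_def)

text \<open>Linear and bilinear forms are evaluated in the integers; reduction mod p happens
  only where it is needed.\<close>
definition lform :: "nat \<Rightarrow> (nat \<Rightarrow> int) \<Rightarrow> (nat \<Rightarrow> int) \<Rightarrow> int" where
  "lform n u x = (\<Sum>i<n. u i * x i)"

lemma lform_commute: "lform n u x = lform n x u"
  unfolding lform_def by (simp add: mult.commute)

lemma lform_add: "lform n u (\<lambda>i. x i + h i) = lform n u x + lform n u h"
  unfolding lform_def by (simp add: distrib_left sum.distrib)

lemma lform_diff: "lform n u (\<lambda>i. x i - h i) = lform n u x - lform n u h"
  unfolding lform_def by (simp add: right_diff_distrib sum_subtractf)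

lemma lform_add_left: "lform n (\<lambda>i. a i + b i) x = lform n a x + lform n b x"
  unfolding lform_def by (simp add: distrib_right sum.distrib)

lemma lform_double_left: "lform n (\<lambda>i. 2 * a i) x = 2 * lform n a x"
  unfolding lform_def by (simp add: sum_distrib_left mult_ac)

lemma lform_sum_left: "lform n (\<lambda>i. \<Sum>j<k. c j * v j i) x = (\<Sum>j<k. c j * lform n (v j) x)"
  unfolding lform_def sum_distrib_left sum_distrib_right by (subst sum.swap) (simp add: mult_ac)

lemma sum_vecs_addchar:
  assumes "p > 0"
  shows "(\<Sum>x\<in>vecs p n. addchar p (lform n c x)) = (if \<forall>i<n. int p dvd c i then of_nat p ^ n else 0)"
proof -
  have "(\<Sum>x\<in>vecs p n. addchar p (lform n c x)) = (\<Sum>x\<in>vecs p n. \<Prod>i<n. addchar p (x i * c i))"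
    unfolding lform_def addchar_sum by (simp add: mult.commute)
  also have "\<dots> = (\<Prod>i<n. \<Sum>a\<in>Fp p. addchar p (a * c i))"
    by (rule sum_vecs_prod)
  also have "\<dots> = (\<Prod>i<n. if int p dvd c i then of_nat p else 0)"
    using sum_Fp_addchar[OF assms] by simp
  also have "\<dots> = (if \<forall>i<n. int p dvd c i then of_nat p ^ n else 0)"
    by (induction n) (auto simp: less_Suc_eq mult.commute)
  finally show ?thesis .
qed

lemma of_bool_dvd_all_eq:
  assumes "p > 0"
  shows "of_bool (\<forall>j<m. int p dvd P j) = (\<Sum>c\<in>vecs p m. addchar p (lform m c P)) / of_nat p ^ m"
  using sum_vecs_addchar[OF assms, of m P] assms by (simp add: lform_commute[of m _ P])

lemma of_nat_card_filter:
  "finite A \<Longrightarrow> of_nat (card {x\<in>A. Q x}) = (\<Sum>x\<in>A. of_bool (Q x) :: 'b::semiring_1)"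
  by (simp add: Int_def conj_commute)

section \<open>Affine subspaces and rank\<close>

definition affine_sol :: "nat \<Rightarrow> nat \<Rightarrow> ((nat \<Rightarrow> int) \<times> int) list \<Rightarrow> (nat \<Rightarrow> int) set" where
  "affine_sol p n sys = {x \<in> vecs p n. \<forall>(v, b) \<in> set sys. int p dvd lform n v x + b}"

lemma finite_affine_sol [simp]: "finite (affine_sol p n sys)"
  unfolding affine_sol_def by simp

lemma affine_sol_subset: "affine_sol p n sys \<subseteq> vecs p n"
  unfolding affine_sol_def by blast

lemma mem_affine_sol_iff:
  "x \<in> affine_sol p n sys \<longleftrightarrow>
     x \<in> vecs p n \<and> (\<forall>j<length sys. int p dvd lform n (fst (sys ! j)) x + snd (sys ! j))"
  unfolding affine_sol_def all_set_conv_all_nth by (simp add: case_prod_unfold)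

lemma lin_indep_coeffs_zero:
  assumes "lin_indep p n vs" "c \<in> vecs p (length vs)"
    and "\<forall>i<n. int p dvd (\<Sum>j<length vs. c j * (vs ! j) i)"
  shows "c = vzero"
  using assms unfolding lin_indep_def vecs_eq_vzero_iff[OF assms(2)] by (auto simp: vecs_def)

definition comb_lhs :: "((nat \<Rightarrow> int) \<times> int) list \<Rightarrow> (nat \<Rightarrow> int) \<Rightarrow> nat \<Rightarrow> int" where
  "comb_lhs sys c = (\<lambda>i. \<Sum>j<length sys. c j * fst (sys ! j) i)"

definition comb_rhs :: "((nat \<Rightarrow> int) \<times> int) list \<Rightarrow> (nat \<Rightarrow> int) \<Rightarrow> int" where
  "comb_rhs sys c = (\<Sum>j<length sys. c j * snd (sys ! j))"

lemma of_bool_mem_affine_sol: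
  assumes "p > 0" "x \<in> vecs p n"
  shows "of_bool (x \<in> affine_sol p n sys)
    = (\<Sum>c\<in>vecs p (length sys). addchar p (lform n (comb_lhs sys c) x + comb_rhs sys c)) / of_nat p ^ length sys"
proof -
  have "lform (length sys) c (\<lambda>j. lform n (fst (sys ! j)) x + snd (sys ! j))
      = lform n (comb_lhs sys c) x + comb_rhs sys c" for c
    unfolding comb_lhs_def comb_rhs_def lform_sum_left by (simp add: lform_def distrib_left sum.distrib)
  thus ?thesis
    using assms(2) of_bool_dvd_all_eq[OF assms(1), of "length sys" "\<lambda>j. lform n (fst (sys ! j)) x + snd (sys ! j)"]
    unfolding mem_affine_sol_iff by simp
qed

lemma card_affine_sol:
  assumes p: "p > 0" and indep: "lin_indep p n (map fst sys)"
  shows "card (affine_sol p n sys) * p ^ length sys = p ^ n"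
proof -
  let ?k = "length sys"
  have char_sum: "(\<Sum>x\<in>vecs p n. addchar p (lform n (comb_lhs sys c) x + comb_rhs sys c))
      = (if c = vzero then of_nat p ^ n else 0)"
    if c: "c \<in> vecs p ?k" for c
  proof -
    have "c = vzero" if "\<forall>i<n. int p dvd comb_lhs sys c i"
      using lin_indep_coeffs_zero[OF indep] c that by (simp add: comb_lhs_def)
    moreover have "\<forall>i<n. int p dvd comb_lhs sys c i" if "c = vzero"
      using that by (simp add: vzero_def comb_lhs_def)
    ultimately have iff: "(\<forall>i<n. int p dvd comb_lhs sys c i) \<longleftrightarrow> c = vzero" by blast
    have "(\<Sum>x\<in>vecs p n. addchar p (lform n (comb_lhs sys c) x + comb_rhs sys c))
        = addchar p (comb_rhs sys c) * (\<Sum>x\<in>vecs p n. addchar p (lform n (comb_lhs sys c) x))"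
      unfolding addchar_add sum_distrib_left by (simp add: mult.commute)
    also have "\<dots> = (if c = vzero then of_nat p ^ n else 0)"
      unfolding sum_vecs_addchar[OF p] iff by (simp add: comb_rhs_def vzero_def)
    finally show ?thesis .
  qed
  have "(of_nat (card (affine_sol p n sys)) :: complex) = (\<Sum>x\<in>vecs p n. of_bool (x \<in> affine_sol p n sys))"
    using affine_sol_subset[of p n sys] by (simp add: Int_absorb1)
  also have "\<dots> = (\<Sum>c\<in>vecs p ?k. \<Sum>x\<in>vecs p n. addchar p (lform n (comb_lhs sys c) x + comb_rhs sys c))
                  / of_nat p ^ ?k"
    by (simp add: of_bool_mem_affine_sol[OF p] sum_divide_distrib) (rule sum.swap)
  also have "\<dots> = of_nat p ^ n / of_nat p ^ ?k"
    using p by (simp add: char_sum sum.delta)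
  finally have "(of_nat (card (affine_sol p n sys) * p ^ ?k) :: complex) = of_nat (p ^ n)"
    using p by (simp add: field_simps)
  thus ?thesis by (simp only: of_nat_eq_iff)
qed

lemma lin_indep_length_le:
  assumes "p \<ge> 2" "lin_indep p n vs"
  shows "length vs \<le> n"
proof -
  let ?sys = "map (\<lambda>v. (v, 0)) vs"
  have "vzero \<in> affine_sol p n ?sys"
    using assms(1) unfolding affine_sol_def by (auto simp: lform_def vzero_def vecs_def Fp_def)
  hence "card (affine_sol p n ?sys) > 0"
    by (auto simp: card_gt_0_iff)
  hence "p ^ length vs \<le> card (affine_sol p n ?sys) * p ^ length vs"
    by simp
  also have "\<dots> = p ^ n"
    using card_affine_sol[of p n ?sys] assms by (simp add: comp_def)
  finally show ?thesis using assms(1) by (simp add: power_increasing_iff)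
qed

lemma mrank_witness:
  assumes "p \<ge> 2"
  obtains ix where "length ix = mrank p n M" "\<forall>i\<in>set ix. i < n"
    "lin_indep p n (map (mrow p n M) ix)"
proof -
  let ?K = "{k. \<exists>ix. length ix = k \<and> (\<forall>i\<in>set ix. i < n) \<and> lin_indep p n (map (mrow p n M) ix)}"
  have "?K \<subseteq> {..n}"
    using lin_indep_length_le[OF assms] by fastforce
  hence fin: "finite ?K" by (rule finite_subset) simp
  have "0 \<in> ?K"
    unfolding mem_Collect_eq by (rule exI[of _ "[]"]) (simp add: lin_indep_def)
  hence "Max ?K \<in> ?K" using Max_in[OF fin] by blast
  then obtain ix where "length ix = Max ?K" "\<forall>i\<in>set ix. i < n"
      "lin_indep p n (map (mrow p n M) ix)"
    by blast
  thus ?thesis using that[of ix] unfolding mrank_def by blast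
qed

lemma mrank_le: "p \<ge> 2 \<Longrightarrow> mrank p n M \<le> n"
  by (metis length_map lin_indep_length_le mrank_witness)

lemma card_kernel_le:
  assumes "p \<ge> 2"
  shows "card {g\<in>vecs p n. \<forall>i<n. int p dvd lform n (M i) g + v i} * p ^ mrank p n M \<le> p ^ n"
proof -
  obtain ix where ix: "length ix = mrank p n M" "\<forall>i\<in>set ix. i < n"
      "lin_indep p n (map (mrow p n M) ix)"
    using mrank_witness[OF assms] by blast
  let ?sys = "map (\<lambda>i. (mrow p n M i, v i)) ix"
  have row: "lform n (mrow p n M i) g mod int p = lform n (M i) g mod int p" for i g
    unfolding lform_def mrow_def by (rule sum_mod_cong) (simp add: mod_mult_left_eq)
  have row_dvd: "int p dvd lform n (mrow p n M i) g + c \<longleftrightarrow> int p dvd lform n (M i) g + c" for i g c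
    using mod_add_cong[OF row[of i g] refl, of c] by (simp add: dvd_eq_mod_eq_0)
  have "{g\<in>vecs p n. \<forall>i<n. int p dvd lform n (M i) g + v i} \<subseteq> affine_sol p n ?sys"
    unfolding affine_sol_def using ix(2) by (auto simp: row_dvd)
  hence "card {g\<in>vecs p n. \<forall>i<n. int p dvd lform n (M i) g + v i} * p ^ mrank p n M
      \<le> card (affine_sol p n ?sys) * p ^ mrank p n M"
    by (intro mult_le_mono1 card_mono) auto
  also have "\<dots> = p ^ n"
    using card_affine_sol[of p n ?sys] ix(1,3) assms by (simp add: comp_def)
  finally show ?thesis .
qed

lemma qrank_le_mrank:
  assumes "p \<ge> 2" "lam \<in> vecs p (length Ms)" "lam \<noteq> vzero"
  shows "qrank p n Ms \<le> mrank p n (mlincomb p n lam Ms)"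
proof -
  let ?S = "{mrank p n (mlincomb p n lam Ms) | lam.
            (\<forall>k<length Ms. lam k \<in> Fp p) \<and> (\<forall>k\<ge>length Ms. lam k = 0) \<and> (\<exists>k<length Ms. lam k \<noteq> 0)}"
  have "Ms \<noteq> []"
  proof
    assume "Ms = []"
    with assms(2) have "lam = vzero" by (simp add: vecs_0)
    with assms(3) show False by contradiction
  qed
  have "?S \<subseteq> {..n}" using mrank_le[OF assms(1)] by blast
  hence fin: "finite ?S" by (rule finite_subset) simp
  have "\<exists>k<length Ms. lam k \<noteq> 0"
    using assms(3) vecs_eq_vzero_iff[OF assms(2)] by blast
  moreover have "(\<forall>k<length Ms. lam k \<in> Fp p) \<and> (\<forall>k\<ge>length Ms. lam k = 0)"
    using assms(2) unfolding vecs_def by blast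
  ultimately have "mrank p n (mlincomb p n lam Ms) \<in> ?S" by blast
  hence "Min ?S \<le> mrank p n (mlincomb p n lam Ms)" by (rule Min_le[OF fin])
  thus ?thesis
    using \<open>Ms \<noteq> []\<close> unfolding qrank_def by (simp only: if_False)
qed

definition bform :: "nat \<Rightarrow> (nat \<Rightarrow> nat \<Rightarrow> int) \<Rightarrow> (nat \<Rightarrow> int) \<Rightarrow> (nat \<Rightarrow> int) \<Rightarrow> int" where
  "bform n A x y = (\<Sum>i<n. \<Sum>j<n. x i * A i j * y j)"

definition vcong :: "nat \<Rightarrow> nat \<Rightarrow> (nat \<Rightarrow> int) \<Rightarrow> (nat \<Rightarrow> int) \<Rightarrow> bool" where
  "vcong p n x y \<longleftrightarrow> (\<forall>i<n. x i mod int p = y i mod int p)"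

lemma bil_eq_bform: "bil p n M x y = bform n M x y mod int p"
  unfolding bil_def bform_def by simp

lemma bform_add_left: "bform n A (\<lambda>i. x i + h i) y = bform n A x y + bform n A h y"
  unfolding bform_def by (simp add: distrib_right sum.distrib)

lemma bform_add_right: "bform n A x (\<lambda>i. y i + h i) = bform n A x y + bform n A x h"
  unfolding bform_def by (simp add: distrib_left sum.distrib)

lemma bform_diff_left: "bform n A (\<lambda>i. x i - h i) y = bform n A x y - bform n A h y"
  unfolding bform_def by (simp add: left_diff_distrib sum_subtractf)

lemma bform_diff_right: "bform n A x (\<lambda>i. y i - h i) = bform n A x y - bform n A x h"
  unfolding bform_def by (simp add: right_diff_distrib sum_subtractf)

lemma bform_eq_lform: "bform n A x y = lform n x (\<lambda>i. lform n (A i) y)"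
  unfolding bform_def lform_def by (simp add: sum_distrib_left mult_ac)

lemma bform_commute:
  assumes "is_sym A"
  shows "bform n A x y = bform n A y x"
proof -
  have "bform n A x y = (\<Sum>j<n. \<Sum>i<n. x i * A i j * y j)"
    unfolding bform_def by (rule sum.swap)
  also have "\<dots> = bform n A y x"
    using assms unfolding bform_def is_sym_def by (simp add: mult_ac)
  finally show ?thesis .
qed

lemma sum_bform: "(\<Sum>k<q. l k * bform n (M k) x y) = bform n (\<lambda>i j. \<Sum>k<q. l k * M k i j) x y"
  unfolding bform_def sum_distrib_left sum_distrib_right
  by (subst sum.swap, rule sum.cong[OF refl], subst sum.swap) (simp add: mult_ac)

lemma vcong_refl [simp]: "vcong p n x x"
  unfolding vcong_def by simp

lemma vcong_sym: "vcong p n x y \<Longrightarrow> vcong p n y x"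
  unfolding vcong_def by simp

lemma vcong_add:
  "vcong p n x x' \<Longrightarrow> vcong p n h h' \<Longrightarrow> vcong p n (vadd p x h) (\<lambda>i. x' i + h' i)"
  unfolding vcong_def vadd_def by (metis mod_add_cong mod_mod_trivial)

lemma vcong_diff:
  "vcong p n x x' \<Longrightarrow> vcong p n h h' \<Longrightarrow> vcong p n (vsub p x h) (\<lambda>i. x' i - h' i)"
  unfolding vcong_def vsub_def by (metis mod_diff_cong mod_mod_trivial)

lemma lform_vcong:
  assumes "vcong p n x x'"
  shows "lform n u x mod int p = lform n u x' mod int p"
  unfolding lform_def
  by (rule sum_mod_cong) (use assms in \<open>auto simp: vcong_def intro: mod_mult_cong\<close>)

lemma bform_vcong:
  assumes "vcong p n x x'" "vcong p n y y'"
  shows "bform n A x y mod int p = bform n A x' y' mod int p"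
  unfolding bform_def
  by (intro sum_mod_cong) (use assms in \<open>auto simp: vcong_def intro: mod_mult_cong\<close>)

lemma dvd_diff_mod_cong: "a mod m = a' mod m \<Longrightarrow> (m::int) dvd a - d \<longleftrightarrow> m dvd a' - d"
  by (metis mod_diff_cong mod_eq_dvd_iff)

lemma dvd_add_mod_cong: "a mod m = a' mod m \<Longrightarrow> (m::int) dvd a + d \<longleftrightarrow> m dvd a' + d"
  by (metis mod_add_cong mod_eq_0_iff_dvd)

lemma vecs_eq_if_vcong:
  assumes "u \<in> vecs p n" "u' \<in> vecs p n" "vcong p n u u'"
  shows "u = u'"
proof
  fix i show "u i = u' i"
    using assms Fp_mod unfolding vecs_def vcong_def by (cases "i < n") auto
qed

lemma vadd_in_vecs: "p > 0 \<Longrightarrow> x \<in> vecs p n \<Longrightarrow> h \<in> vecs p n \<Longrightarrow> vadd p x h \<in> vecs p n"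
  unfolding vecs_def vadd_def Fp_def by auto

lemma vsub_in_vecs: "p > 0 \<Longrightarrow> x \<in> vecs p n \<Longrightarrow> h \<in> vecs p n \<Longrightarrow> vsub p x h \<in> vecs p n"
  unfolding vecs_def vsub_def Fp_def by auto

lemma vadd_image:
  assumes "p > 0" "x \<in> vecs p n"
  shows "vadd p x ` vecs p n = vecs p n" and "inj_on (vadd p x) (vecs p n)"
proof -
  show inj: "inj_on (vadd p x) (vecs p n)"
  proof (rule inj_onI)
    fix h h' assume h: "h \<in> vecs p n" "h' \<in> vecs p n" and eq: "vadd p x h = vadd p x h'"
    have "h i mod int p = h' i mod int p" for i
    proof -
      have "(x i + h i) mod int p = (x i + h' i) mod int p"
        using fun_cong[OF eq, of i] unfolding vadd_def .
      from mod_diff_cong[OF this refl, of "x i"] show ?thesis by simp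
    qed
    hence "vcong p n h h'" unfolding vcong_def by blast
    thus "h = h'" using vecs_eq_if_vcong h by blast
  qed
  show "vadd p x ` vecs p n = vecs p n"
    using endo_inj_surj[OF finite_vecs _ inj] vadd_in_vecs[OF assms] by blast
qed

lemma bil_mlincomb:
  "(\<Sum>k<length Ms. l k * bil p n (Ms ! k) x y) mod int p = bform n (mlincomb p n l Ms) x y mod int p"
proof -
  have "(\<Sum>k<length Ms. l k * bil p n (Ms ! k) x y) mod int p
      = (\<Sum>k<length Ms. l k * bform n (Ms ! k) x y) mod int p"
    unfolding bil_eq_bform by (intro sum_mod_cong) (simp add: mod_mult_right_eq)
  also have "\<dots> = bform n (\<lambda>i j. \<Sum>k<length Ms. l k * (Ms ! k) i j) x y mod int p"
    by (simp add: sum_bform)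
  also have "\<dots> = bform n (mlincomb p n l Ms) x y mod int p"
    unfolding bform_def mlincomb_def
    by (intro sum_mod_cong) (simp add: mod_mult_middle[symmetric])
  finally show ?thesis .
qed

lemma mlincomb_is_sym: "\<forall>M\<in>set Ms. is_sym M \<Longrightarrow> is_sym (mlincomb p n l Ms)"
  unfolding is_sym_def mlincomb_def by (auto intro!: sum.cong simp: all_set_conv_all_nth)

lemma mlincomb_vzero: "mlincomb p n vzero Ms = (\<lambda>i j. 0)"
  unfolding mlincomb_def vzero_def by (intro ext) simp

lemma lform_mvec: "lform n (mvec p n M v) x mod int p = bform n M x v mod int p"
  unfolding lform_commute[of n _ x] bform_eq_lform lform_def mvec_def
  by (intro sum_mod_cong) (simp add: mod_mult_left_eq mod_mult_right_eq ac_simps)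

lemma odd_prime_dvd_double:
  assumes "prime p" "odd p" "int p dvd 2 * a"
  shows "int p dvd a"
proof -
  have "\<not> p dvd 2"
  proof
    assume "p dvd 2"
    hence "p \<le> 2" by (rule dvd_imp_le) simp
    with prime_ge_2_nat[OF assms(1)] assms(2) show False by simp
  qed
  hence "\<not> int p dvd 2" using int_dvd_int_iff[of p 2] by simp
  thus ?thesis using assms prime_dvd_mult_iff[of "int p" 2 a] by simp
qed

section \<open>Exponential sums of quadratic phases\<close>

definition quad_phase :: "nat \<Rightarrow> (nat \<Rightarrow> nat \<Rightarrow> int) \<Rightarrow> (nat \<Rightarrow> nat \<Rightarrow> int) \<Rightarrow> (nat \<Rightarrow> nat \<Rightarrow> int)
    \<Rightarrow> (nat \<Rightarrow> int) \<Rightarrow> (nat \<Rightarrow> int) \<Rightarrow> int \<Rightarrow> (nat \<Rightarrow> int) \<Rightarrow> (nat \<Rightarrow> int) \<Rightarrow> int" where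
  "quad_phase n A D B u v \<kappa> x y =
     bform n A x x + bform n D y y + bform n B x y + lform n u x + lform n v y + \<kappa>"

text \<open>The gradient in x of the quadratic part of quad_phase at (h, g); for symmetric B,
  quad_grad n D B g h is the gradient in y.\<close>
definition quad_grad :: "nat \<Rightarrow> (nat \<Rightarrow> nat \<Rightarrow> int) \<Rightarrow> (nat \<Rightarrow> nat \<Rightarrow> int) \<Rightarrow> (nat \<Rightarrow> int) \<Rightarrow> (nat \<Rightarrow> int) \<Rightarrow> nat \<Rightarrow> int" where
  "quad_grad n A B h g = (\<lambda>i. 2 * lform n (A i) h + lform n (B i) g)"

definition radical :: "nat \<Rightarrow> nat \<Rightarrow> (nat \<Rightarrow> nat \<Rightarrow> int) \<Rightarrow> (nat \<Rightarrow> nat \<Rightarrow> int) \<Rightarrow> (nat \<Rightarrow> nat \<Rightarrow> int)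
    \<Rightarrow> ((nat \<Rightarrow> int) \<times> (nat \<Rightarrow> int)) set" where
  "radical p n A D B = {(h, g) \<in> vecs p n \<times> vecs p n.
     (\<forall>i<n. int p dvd quad_grad n A B h g i) \<and> (\<forall>i<n. int p dvd quad_grad n D B g h i)}"

lemma lform_quad_grad: "lform n (quad_grad n A B h g) x = 2 * bform n A x h + bform n B x g"
  unfolding quad_grad_def lform_add_left lform_double_left
  by (simp add: bform_eq_lform lform_commute[of n x])

lemma quad_phase_shift:
  assumes sym: "is_sym A" "is_sym D" "is_sym B"
  shows "quad_phase n A D B u v \<kappa> (\<lambda>i. x i + h i) (\<lambda>i. y i + g i) =
    quad_phase n A D B u v \<kappa> x y + quad_phase n A D B u v 0 h g
    + lform n (quad_grad n A B h g) x + lform n (quad_grad n D B g h) y"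
  unfolding quad_phase_def lform_quad_grad
  using bform_commute[OF sym(1), of n h x] bform_commute[OF sym(2), of n g y]
    bform_commute[OF sym(3), of n h y]
  by (simp add: bform_add_left bform_add_right lform_add algebra_simps)

lemma quad_phase_vcong:
  assumes "vcong p n x x'" "vcong p n y y'"
  shows "quad_phase n A D B u v \<kappa> x y mod int p = quad_phase n A D B u v \<kappa> x' y' mod int p"
  unfolding quad_phase_def
  by (intro mod_add_cong bform_vcong lform_vcong assms refl)

lemma addchar_quad_phase_shift:
  assumes p: "p > 0" and sym: "is_sym A" "is_sym D" "is_sym B"
  shows "addchar p (quad_phase n A D B u v \<kappa> (vadd p x h) (vadd p y g))
           * cnj (addchar p (quad_phase n A D B u v \<kappa> x y))
       = addchar p (quad_phase n A D B u v 0 h g)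
           * addchar p (lform n (quad_grad n A B h g) x) * addchar p (lform n (quad_grad n D B g h) y)"
proof -
  let ?Q = "quad_phase n A D B u v \<kappa>"
  have "?Q (vadd p x h) (vadd p y g) mod int p = ?Q (\<lambda>i. x i + h i) (\<lambda>i. y i + g i) mod int p"
    by (intro quad_phase_vcong vcong_add vcong_refl)
  hence "addchar p (?Q (vadd p x h) (vadd p y g) - ?Q x y)
       = addchar p (?Q (\<lambda>i. x i + h i) (\<lambda>i. y i + g i) - ?Q x y)"
    by (intro addchar_cong p mod_diff_cong refl)
  thus ?thesis
    unfolding quad_phase_shift[OF sym] by (simp add: addchar_diff addchar_add)
qed

lemma sum_pairs_translate:
  assumes p: "p > 0" and "x \<in> vecs p n" "y \<in> vecs p n"
  shows "(\<Sum>z\<in>vecs p n \<times> vecs p n. f z) = (\<Sum>k\<in>vecs p n \<times> vecs p n. f (vadd p x (fst k), vadd p y (snd k)))"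
proof -
  let ?\<tau> = "map_prod (vadd p x) (vadd p y)"
  have "?\<tau> ` (vecs p n \<times> vecs p n) = vecs p n \<times> vecs p n" "inj_on ?\<tau> (vecs p n \<times> vecs p n)"
    using vadd_image[OF p] assms(2,3) by (auto intro!: map_prod_surj_on map_prod_inj_on)
  thus ?thesis by (metis (no_types, lifting) map_prod_simp prod.collapse sum.reindex_cong)
qed

lemma sum_addchar_grads:
  assumes p: "p > 0" and k: "k \<in> vecs p n \<times> vecs p n"
  shows "(\<Sum>z\<in>vecs p n \<times> vecs p n. addchar p (lform n (quad_grad n A B (fst k) (snd k)) (fst z))
           * addchar p (lform n (quad_grad n D B (snd k) (fst k)) (snd z)))
       = of_bool (k \<in> radical p n A D B) * of_nat p ^ (2 * n)"
proof -
  have "(\<Sum>z\<in>vecs p n \<times> vecs p n. addchar p (lform n (quad_grad n A B (fst k) (snd k)) (fst z))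
           * addchar p (lform n (quad_grad n D B (snd k) (fst k)) (snd z)))
      = (\<Sum>x\<in>vecs p n. addchar p (lform n (quad_grad n A B (fst k) (snd k)) x))
        * (\<Sum>y\<in>vecs p n. addchar p (lform n (quad_grad n D B (snd k) (fst k)) y))"
    unfolding sum_product sum.cartesian_product by (simp add: case_prod_unfold)
  thus ?thesis
    using k unfolding sum_vecs_addchar[OF p] radical_def by (auto simp: mult_2 power_add)
qed

text \<open>Weyl differencing: after squaring, the substitution (x, y) \<mapsto> (x + h, y + g) turns the
  phase difference into a quadratic term in (h, g) plus linear forms in (x, y) whose
  coefficients are the gradients; summing over (x, y) kills every (h, g) off the radical.\<close>
lemma char_sum_square_le:
  fixes n :: nat and u v :: "nat \<Rightarrow> int" and \<kappa> :: int
  assumes p: "p > 0" and sym: "is_sym A" "is_sym D" "is_sym B"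
  defines "F \<equiv> \<lambda>z. addchar p (quad_phase n A D B u v \<kappa> (fst z) (snd z))"
  shows "(cmod (\<Sum>z\<in>vecs p n \<times> vecs p n. F z))\<^sup>2 \<le> real p ^ (2 * n) * real (card (radical p n A D B))"
proof -
  let ?W = "vecs p n \<times> vecs p n"
  let ?S = "\<Sum>z\<in>?W. F z"
  let ?R = "radical p n A D B"
  define \<psi> where "\<psi> k = addchar p (quad_phase n A D B u v 0 (fst k) (snd k))" for k
  define G where "G k z = addchar p (lform n (quad_grad n A B (fst k) (snd k)) (fst z))
                        * addchar p (lform n (quad_grad n D B (snd k) (fst k)) (snd z))" for k z
  have shift: "(\<Sum>z\<in>?W. F z * cnj (F z')) = (\<Sum>k\<in>?W. \<psi> k * G k z')" if z': "z' \<in> ?W" for z'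
  proof -
    have "(\<Sum>z\<in>?W. F z * cnj (F z'))
        = (\<Sum>k\<in>?W. F (vadd p (fst z') (fst k), vadd p (snd z') (snd k)) * cnj (F z'))"
      using z' by (intro sum_pairs_translate[OF p]) auto
    thus ?thesis
      unfolding F_def \<psi>_def G_def by (simp add: addchar_quad_phase_shift[OF p sym] mult.assoc)
  qed
  have "complex_of_real ((cmod ?S)\<^sup>2) = ?S * cnj ?S" by (rule complex_norm_square)
  also have "\<dots> = (\<Sum>z'\<in>?W. \<Sum>k\<in>?W. \<psi> k * G k z')"
    by (simp add: sum_product) (subst sum.swap, simp add: shift)
  also have "\<dots> = (\<Sum>k\<in>?W. of_bool (k \<in> ?R) * (\<psi> k * of_nat p ^ (2 * n)))"
    by (subst sum.swap) (simp add: sum_distrib_left[symmetric] G_def sum_addchar_grads[OF p] ac_simps)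
  also have "\<dots> = (\<Sum>k\<in>?R. \<psi> k) * of_nat p ^ (2 * n)"
  proof -
    have "?W \<inter> {k. k \<in> ?R} = ?R" unfolding radical_def by auto
    thus ?thesis
      using sum_of_bool_mult_eq[of ?W "\<lambda>k. k \<in> ?R" "\<lambda>k. \<psi> k * of_nat p ^ (2 * n)"]
      by (simp add: sum_distrib_right)
  qed
  finally have eq: "complex_of_real ((cmod ?S)\<^sup>2) = (\<Sum>k\<in>?R. \<psi> k) * of_nat p ^ (2 * n)" .
  have "(cmod ?S)\<^sup>2 = cmod (\<Sum>k\<in>?R. \<psi> k) * real p ^ (2 * n)"
    using arg_cong[OF eq, of cmod] by (simp add: norm_mult norm_power)
  also have "\<dots> \<le> real (card ?R) * real p ^ (2 * n)"
    using norm_sum[of \<psi> ?R] by (intro mult_right_mono) (simp_all add: \<psi>_def)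
  finally show ?thesis by (simp add: mult.commute)
qed

lemma card_radical_le_rank:
  assumes "p \<ge> 2"
  shows "card (radical p n A D B) * p ^ mrank p n B \<le> p ^ (2 * n)"
proof -
  let ?V = "vecs p n"
  let ?G = "\<lambda>h. {g\<in>?V. \<forall>i<n. int p dvd lform n (B i) g + 2 * lform n (A i) h}"
  have "radical p n A D B \<subseteq> Sigma ?V ?G"
    unfolding radical_def quad_grad_def by (auto simp: add.commute)
  hence "card (radical p n A D B) \<le> card (Sigma ?V ?G)"
    by (intro card_mono) auto
  also have "\<dots> = (\<Sum>h\<in>?V. card (?G h))"
    by (rule card_SigmaI) auto
  finally have "card (radical p n A D B) * p ^ mrank p n B \<le> (\<Sum>h\<in>?V. card (?G h)) * p ^ mrank p n B"
    by (rule mult_le_mono1)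
  also have "\<dots> = (\<Sum>h\<in>?V. card (?G h) * p ^ mrank p n B)"
    by (rule sum_distrib_right)
  also have "\<dots> \<le> (\<Sum>h\<in>?V. p ^ n)"
    by (intro sum_mono card_kernel_le assms)
  also have "\<dots> = p ^ (2 * n)"
    by (simp add: card_vecs mult_2 power_add)
  finally show ?thesis .
qed

lemma card_radical_uncoupled_le:
  assumes "prime p" "odd p"
  shows "card (radical p n A D (\<lambda>i j. 0)) * p ^ mrank p n A \<le> p ^ (2 * n)"
proof -
  let ?V = "vecs p n"
  let ?KA = "{h\<in>?V. \<forall>i<n. int p dvd lform n (A i) h + 0}"
  have "radical p n A D (\<lambda>i j. 0) \<subseteq> ?KA \<times> ?V"
    unfolding radical_def quad_grad_def
    by (auto simp: lform_def intro: odd_prime_dvd_double[OF assms])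
  hence "card (radical p n A D (\<lambda>i j. 0)) \<le> card ?KA * p ^ n"
    using card_mono[of "?KA \<times> ?V"] by (simp add: card_cartesian_product card_vecs)
  hence "card (radical p n A D (\<lambda>i j. 0)) * p ^ mrank p n A \<le> card ?KA * p ^ mrank p n A * p ^ n"
    by (simp add: mult_ac)
  also have "\<dots> \<le> p ^ n * p ^ n"
    using assms(1) by (intro mult_le_mono1 card_kernel_le) (simp add: prime_ge_2_nat)
  finally show ?thesis by (simp add: mult_2 power_add)
qed

lemma card_radical_swap: "card (radical p n A D B) = card (radical p n D A B)"
proof -
  have "radical p n D A B = prod.swap ` radical p n A D B"
    unfolding radical_def by force
  thus ?thesis by (simp add: card_image)
qed

lemma quad_char_sum_bound:
  fixes n :: nat and u v :: "nat \<Rightarrow> int" and \<kappa> :: int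
  assumes p: "p > 0" and sym: "is_sym A" "is_sym D" "is_sym B"
    and rad: "card (radical p n A D B) * p ^ r \<le> p ^ (2 * n)"
  shows "cmod (\<Sum>x\<in>vecs p n. \<Sum>y\<in>vecs p n. addchar p (quad_phase n A D B u v \<kappa> x y))
         \<le> real p powr (2 * real n - real r / 2)"
proof -
  let ?S = "\<Sum>x\<in>vecs p n. \<Sum>y\<in>vecs p n. addchar p (quad_phase n A D B u v \<kappa> x y)"
  have "?S = (\<Sum>z\<in>vecs p n \<times> vecs p n. addchar p (quad_phase n A D B u v \<kappa> (fst z) (snd z)))"
    by (simp add: sum.cartesian_product case_prod_unfold)
  hence "(cmod ?S)\<^sup>2 \<le> real p ^ (2 * n) * real (card (radical p n A D B))"
    using char_sum_square_le[OF p sym] by simp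
  also have "\<dots> \<le> real p ^ (2 * n) * (real p ^ (2 * n) / real p ^ r)"
    using rad p by (intro mult_left_mono) (simp_all add: field_simps flip: of_nat_mult of_nat_power)
  also have "\<dots> = real p powr (real (2 * n) + real (2 * n) - real r)"
    using p by (simp only: powr_diff powr_add powr_realpow of_nat_0_less_iff times_divide_eq_right)
  also have "\<dots> = (real p powr (2 * real n - real r / 2))\<^sup>2"
    using p by (subst powr_power) (simp_all add: algebra_simps)
  finally show ?thesis
    by (rule power2_le_imp_le) simp
qed

section \<open>Quadratic systems on affine subspaces\<close>

lemma sum_affine_sol_pairs:
  fixes f :: "(nat \<Rightarrow> int) \<Rightarrow> (nat \<Rightarrow> int) \<Rightarrow> 'b::semiring_1"
  shows "(\<Sum>z\<in>affine_sol p n sx \<times> affine_sol p n sy. f (fst z) (snd z))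
    = (\<Sum>x\<in>vecs p n. \<Sum>y\<in>vecs p n. of_bool (x \<in> affine_sol p n sx) * of_bool (y \<in> affine_sol p n sy) * f x y)"
proof -
  have restrict: "(\<Sum>x\<in>affine_sol p n s. g x) = (\<Sum>x\<in>vecs p n. of_bool (x \<in> affine_sol p n s) * g x)"
    for s and g :: "(nat \<Rightarrow> int) \<Rightarrow> 'b"
  proof -
    have "vecs p n \<inter> {x. x \<in> affine_sol p n s} = affine_sol p n s"
      using affine_sol_subset by blast
    thus ?thesis using sum_of_bool_mult_eq[OF finite_vecs, of "\<lambda>x. x \<in> affine_sol p n s" g] by simp
  qed
  have "(\<Sum>z\<in>affine_sol p n sx \<times> affine_sol p n sy. f (fst z) (snd z))
      = (\<Sum>x\<in>affine_sol p n sx. \<Sum>y\<in>affine_sol p n sy. f x y)"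
    by (simp add: sum.cartesian_product case_prod_unfold)
  thus ?thesis by (simp only: restrict sum_distrib_left mult.assoc)
qed

lemma of_bool_affine_sol_pair_addchar:
  assumes p: "p > 0" and xy: "x \<in> vecs p n" "y \<in> vecs p n"
  shows "of_bool (x \<in> affine_sol p n sx) * of_bool (y \<in> affine_sol p n sy) * addchar p (quad_phase n A D B u v \<kappa> x y)
    = (\<Sum>cd\<in>vecs p (length sx) \<times> vecs p (length sy).
         addchar p (quad_phase n A D B (\<lambda>i. u i + comb_lhs sx (fst cd) i) (\<lambda>i. v i + comb_lhs sy (snd cd) i)
           (\<kappa> + comb_rhs sx (fst cd) + comb_rhs sy (snd cd)) x y))
      / (of_nat p ^ length sx * of_nat p ^ length sy)"
proof -
  let ?a = "\<lambda>c. addchar p (lform n (comb_lhs sx c) x + comb_rhs sx c)"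
  let ?b = "\<lambda>d. addchar p (lform n (comb_lhs sy d) y + comb_rhs sy d)"
  let ?e = "addchar p (quad_phase n A D B u v \<kappa> x y)"
  have "(\<Sum>cd\<in>vecs p (length sx) \<times> vecs p (length sy).
         addchar p (quad_phase n A D B (\<lambda>i. u i + comb_lhs sx (fst cd) i) (\<lambda>i. v i + comb_lhs sy (snd cd) i)
           (\<kappa> + comb_rhs sx (fst cd) + comb_rhs sy (snd cd)) x y))
      = (\<Sum>c\<in>vecs p (length sx). \<Sum>d\<in>vecs p (length sy). ?a c * ?b d * ?e)"
    unfolding sum.cartesian_product case_prod_unfold quad_phase_def
    by (simp add: lform_add_left addchar_add ac_simps)
  also have "\<dots> = (\<Sum>c\<in>vecs p (length sx). ?a c) * (\<Sum>d\<in>vecs p (length sy). ?b d) * ?e"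
    by (subst sum_product) (simp add: sum_distrib_right)
  finally show ?thesis
    unfolding of_bool_mem_affine_sol[OF p xy(1)] of_bool_mem_affine_sol[OF p xy(2)] by simp
qed

text \<open>The indicator of an affine subspace is an average of additive characters, and these
  only change the linear part of the phase.\<close>
lemma affine_char_sum_bound:
  fixes n :: nat and u v :: "nat \<Rightarrow> int" and \<kappa> :: int
  assumes p: "p > 0" and sym: "is_sym A" "is_sym D" "is_sym B"
    and rad: "card (radical p n A D B) * p ^ r \<le> p ^ (2 * n)"
  shows "cmod (\<Sum>z\<in>affine_sol p n sx \<times> affine_sol p n sy. addchar p (quad_phase n A D B u v \<kappa> (fst z) (snd z)))
         \<le> real p powr (2 * real n - real r / 2)"
proof -
  let ?V = "vecs p n" and ?C = "vecs p (length sx) \<times> vecs p (length sy)"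
  let ?E = "real p powr (2 * real n - real r / 2)"
  define Pw where "Pw = (of_nat p ^ length sx * of_nat p ^ length sy :: complex)"
  define Q where "Q cd x y = quad_phase n A D B (\<lambda>i. u i + comb_lhs sx (fst cd) i) (\<lambda>i. v i + comb_lhs sy (snd cd) i)
      (\<kappa> + comb_rhs sx (fst cd) + comb_rhs sy (snd cd)) x y" for cd x y
  have eq: "(\<Sum>z\<in>affine_sol p n sx \<times> affine_sol p n sy. addchar p (quad_phase n A D B u v \<kappa> (fst z) (snd z)))
      = (\<Sum>cd\<in>?C. \<Sum>x\<in>?V. \<Sum>y\<in>?V. addchar p (Q cd x y)) / Pw"
    unfolding sum_affine_sol_pairs[where f = "\<lambda>x y. addchar p (quad_phase n A D B u v \<kappa> x y)"] Pw_def Q_def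
    by (simp add: of_bool_affine_sol_pair_addchar[OF p] sum_divide_distrib sum.swap[of _ ?C])
  have "cmod (\<Sum>cd\<in>?C. \<Sum>x\<in>?V. \<Sum>y\<in>?V. addchar p (Q cd x y)) \<le> (\<Sum>cd\<in>?C. ?E)"
    unfolding Q_def by (intro norm_sum[THEN order_trans] sum_mono quad_char_sum_bound[OF p sym rad])
  also have "\<dots> = cmod Pw * ?E"
    by (simp add: Pw_def card_cartesian_product card_vecs norm_mult norm_power)
  finally show ?thesis
    unfolding eq using p by (simp add: norm_divide Pw_def divide_le_eq mult_ac)
qed

lemma card_radical_mlincomb_le:
  assumes p: "prime p" "odd p" and sym: "\<forall>M\<in>set Ms. is_sym M"
    and lmv: "l \<in> vecs p (length Ms)" "m \<in> vecs p (length Ms)" "v \<in> vecs p (length Ms)"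
    and nz: "\<not> (l = vzero \<and> m = vzero \<and> v = vzero)"
  shows "card (radical p n (mlincomb p n l Ms) (mlincomb p n m Ms) (mlincomb p n v Ms)) * p ^ qrank p n Ms
         \<le> p ^ (2 * n)"
proof -
  let ?A = "mlincomb p n l Ms" and ?D = "mlincomb p n m Ms" and ?B = "mlincomb p n v Ms"
  let ?R = "radical p n ?A ?D ?B"
  have p_ge_2: "p \<ge> 2" using prime_ge_2_nat[OF p(1)] .
  have weaken: "card R * p ^ qrank p n Ms \<le> p ^ (2 * n)"
    if "card R * p ^ mrank p n M \<le> p ^ (2 * n)" "qrank p n Ms \<le> mrank p n M" for R M
  proof -
    have "p ^ qrank p n Ms \<le> p ^ mrank p n M" using that(2) p_ge_2 by (simp add: power_increasing)
    hence "card R * p ^ qrank p n Ms \<le> card R * p ^ mrank p n M" by simp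
    thus ?thesis using that(1) by linarith
  qed
  show ?thesis
  proof (cases "v = vzero")
    case False
    thus ?thesis
      using weaken[OF card_radical_le_rank[OF p_ge_2] qrank_le_mrank[OF p_ge_2 lmv(3)]] by blast
  next
    case True
    hence B0: "?B = (\<lambda>i j. 0)" by (simp add: mlincomb_vzero)
    show ?thesis
    proof (cases "l = vzero")
      case False
      thus ?thesis
        unfolding B0 by (rule weaken[OF card_radical_uncoupled_le[OF p] qrank_le_mrank[OF p_ge_2 lmv(1)]])
    next
      case True
      hence "m \<noteq> vzero" using nz \<open>v = vzero\<close> by blast
      thus ?thesis
        unfolding B0 card_radical_swap[of p n ?A]
        by (rule weaken[OF card_radical_uncoupled_le[OF p] qrank_le_mrank[OF p_ge_2 lmv(2)]])
    qed
  qed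
qed

text \<open>The phase whose average over (l, m, v) detects the 3q quadratic equations.\<close>
definition system_phase :: "nat \<Rightarrow> nat \<Rightarrow> (nat \<Rightarrow> nat \<Rightarrow> int) list \<Rightarrow> (nat \<Rightarrow> int) \<Rightarrow> (nat \<Rightarrow> int) \<Rightarrow> (nat \<Rightarrow> int)
    \<Rightarrow> (nat \<Rightarrow> int) \<Rightarrow> (nat \<Rightarrow> int) \<Rightarrow> (nat \<Rightarrow> int) \<Rightarrow> (nat \<Rightarrow> int) \<Rightarrow> (nat \<Rightarrow> int) \<Rightarrow> int" where
  "system_phase p n Ms a b c l m v x y =
     lform (length Ms) l (\<lambda>k. bil p n (Ms ! k) x x - a k) + lform (length Ms) m (\<lambda>k. bil p n (Ms ! k) y y - b k)
     + lform (length Ms) v (\<lambda>k. bil p n (Ms ! k) x y - c k)"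

lemma lform_bil_mlincomb:
  "lform (length Ms) l (\<lambda>k. bil p n (Ms ! k) x y - a k) mod int p
   = (bform n (mlincomb p n l Ms) x y - lform (length Ms) l a) mod int p"
proof -
  have "lform (length Ms) l (\<lambda>k. bil p n (Ms ! k) x y - a k)
      = (\<Sum>k<length Ms. l k * bil p n (Ms ! k) x y) - lform (length Ms) l a"
    by (simp add: lform_diff[where x = "\<lambda>k. bil p n (Ms ! k) x y"] lform_def)
  with mod_diff_cong[OF bil_mlincomb refl] show ?thesis by presburger
qed

lemma system_phase_mod:
  "system_phase p n Ms a b c l m v x y mod int p =
   quad_phase n (mlincomb p n l Ms) (mlincomb p n m Ms) (mlincomb p n v Ms) vzero vzero
     (- (lform (length Ms) l a + lform (length Ms) m b + lform (length Ms) v c)) x y mod int p"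
proof -
  have "system_phase p n Ms a b c l m v x y mod int p
      = ((bform n (mlincomb p n l Ms) x x - lform (length Ms) l a) + (bform n (mlincomb p n m Ms) y y - lform (length Ms) m b)
         + (bform n (mlincomb p n v Ms) x y - lform (length Ms) v c)) mod int p"
    unfolding system_phase_def by (intro mod_add_cong lform_bil_mlincomb)
  also have "(bform n (mlincomb p n l Ms) x x - lform (length Ms) l a) + (bform n (mlincomb p n m Ms) y y - lform (length Ms) m b)
         + (bform n (mlincomb p n v Ms) x y - lform (length Ms) v c)
      = quad_phase n (mlincomb p n l Ms) (mlincomb p n m Ms) (mlincomb p n v Ms) vzero vzero
          (- (lform (length Ms) l a + lform (length Ms) m b + lform (length Ms) v c)) x y"
    by (simp add: quad_phase_def lform_def vzero_def)
  finally show ?thesis .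
qed

lemma of_bool_dvd_all3_eq:
  assumes "p > 0"
  shows "of_bool (\<forall>k<q. int p dvd P1 k \<and> int p dvd P2 k \<and> int p dvd P3 k)
    = (\<Sum>t\<in>vecs p q \<times> vecs p q \<times> vecs p q.
         addchar p (lform q (fst t) P1 + lform q (fst (snd t)) P2 + lform q (snd (snd t)) P3))
      / of_nat p ^ (3 * q)"
proof -
  let ?S = "\<lambda>P. \<Sum>c\<in>vecs p q. addchar p (lform q c P)"
  have "of_bool (\<forall>k<q. int p dvd P1 k \<and> int p dvd P2 k \<and> int p dvd P3 k)
      = of_bool (\<forall>k<q. int p dvd P1 k) * of_bool (\<forall>k<q. int p dvd P2 k) * (of_bool (\<forall>k<q. int p dvd P3 k) :: complex)"
    by auto
  also have "\<dots> = ?S P1 * ?S P2 * ?S P3 / of_nat p ^ (3 * q)"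
    unfolding of_bool_dvd_all_eq[OF assms] by (simp add: numeral_3_eq_3 power_add)
  also have "?S P1 * ?S P2 * ?S P3 = ?S P1 * (?S P2 * ?S P3)"
    by (rule mult.assoc)
  also have "\<dots> = (\<Sum>t\<in>vecs p q \<times> vecs p q \<times> vecs p q.
         addchar p (lform q (fst t) P1) * (addchar p (lform q (fst (snd t)) P2) * addchar p (lform q (snd (snd t)) P3)))"
    by (simp only: sum_product sum.cartesian_product case_prod_beta')
  finally show ?thesis by (simp add: addchar_add mult.assoc)
qed

lemma card_quad_system_char_sum:
  assumes p: "p > 0" and fin: "finite Z"
  shows "of_nat (card {z\<in>Z. \<forall>k<length Ms. int p dvd bil p n (Ms ! k) (fst z) (fst z) - a k
       \<and> int p dvd bil p n (Ms ! k) (snd z) (snd z) - b k \<and> int p dvd bil p n (Ms ! k) (fst z) (snd z) - c k})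
       * of_nat p ^ (3 * length Ms)
    = (\<Sum>t\<in>vecs p (length Ms) \<times> vecs p (length Ms) \<times> vecs p (length Ms). \<Sum>z\<in>Z.
         addchar p (system_phase p n Ms a b c (fst t) (fst (snd t)) (snd (snd t)) (fst z) (snd z)))"
proof -
  have "(of_nat (card {z\<in>Z. \<forall>k<length Ms. int p dvd bil p n (Ms ! k) (fst z) (fst z) - a k
       \<and> int p dvd bil p n (Ms ! k) (snd z) (snd z) - b k \<and> int p dvd bil p n (Ms ! k) (fst z) (snd z) - c k}) :: complex)
    = (\<Sum>z\<in>Z. \<Sum>t\<in>vecs p (length Ms) \<times> vecs p (length Ms) \<times> vecs p (length Ms).
         addchar p (system_phase p n Ms a b c (fst t) (fst (snd t)) (snd (snd t)) (fst z) (snd z)))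
      / of_nat p ^ (3 * length Ms)"
    unfolding of_nat_card_filter[OF fin]
    by (simp add: of_bool_dvd_all3_eq[OF p] system_phase_def sum_divide_distrib)
  thus ?thesis using p by (simp add: sum.swap[of _ Z])
qed

lemma norm_system_char_sum_le:
  assumes p: "prime p" "odd p" and sym: "\<forall>M\<in>set Ms. is_sym M"
    and lmv: "l \<in> vecs p (length Ms)" "m \<in> vecs p (length Ms)" "v \<in> vecs p (length Ms)"
    and nz: "\<not> (l = vzero \<and> m = vzero \<and> v = vzero)"
  shows "cmod (\<Sum>z\<in>affine_sol p n sx \<times> affine_sol p n sy. addchar p (system_phase p n Ms a b c l m v (fst z) (snd z)))
         \<le> real p powr (2 * real n - real (qrank p n Ms) / 2)"
proof -
  let ?q = "length Ms"
  have p_pos: "p > 0" using prime_gt_0_nat[OF p(1)] .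
  have "(\<Sum>z\<in>affine_sol p n sx \<times> affine_sol p n sy. addchar p (system_phase p n Ms a b c l m v (fst z) (snd z)))
    = (\<Sum>z\<in>affine_sol p n sx \<times> affine_sol p n sy. addchar p (quad_phase n (mlincomb p n l Ms) (mlincomb p n m Ms)
        (mlincomb p n v Ms) vzero vzero (- (lform ?q l a + lform ?q m b + lform ?q v c)) (fst z) (snd z)))"
    by (intro sum.cong refl addchar_cong p_pos) (simp add: system_phase_mod)
  also have "cmod \<dots> \<le> real p powr (2 * real n - real (qrank p n Ms) / 2)"
    by (rule affine_char_sum_bound[OF p_pos mlincomb_is_sym[OF sym] mlincomb_is_sym[OF sym] mlincomb_is_sym[OF sym]
          card_radical_mlincomb_le[OF p sym lmv nz]])
  finally show ?thesis .
qed

text \<open>The trivial character contributes the main term; each of the other p^(3q) - 1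
  characters is controlled by the rank.\<close>
lemma card_quad_system_estimate:
  fixes n :: nat and sx sy :: "((nat \<Rightarrow> int) \<times> int) list" and a b c :: "nat \<Rightarrow> int"
  assumes p: "prime p" "odd p" and sym: "\<forall>M\<in>set Ms. is_sym M"
  defines "X \<equiv> affine_sol p n sx" and "Y \<equiv> affine_sol p n sy"
  defines "N \<equiv> card {z\<in>X \<times> Y. \<forall>k<length Ms. int p dvd bil p n (Ms ! k) (fst z) (fst z) - a k
       \<and> int p dvd bil p n (Ms ! k) (snd z) (snd z) - b k \<and> int p dvd bil p n (Ms ! k) (fst z) (snd z) - c k}"
  shows "\<bar>real N - real (card X) * real (card Y) / real p ^ (3 * length Ms)\<bar>
         \<le> real p powr (2 * real n - real (qrank p n Ms) / 2)"
proof -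
  let ?q = "length Ms"
  let ?V3 = "vecs p ?q \<times> vecs p ?q \<times> vecs p ?q"
  let ?t0 = "(vzero, vzero, vzero) :: (nat \<Rightarrow> int) \<times> (nat \<Rightarrow> int) \<times> (nat \<Rightarrow> int)"
  let ?E = "real p powr (2 * real n - real (qrank p n Ms) / 2)"
  have p_pos: "p > 0" using prime_gt_0_nat[OF p(1)] .
  define T where "T t = (\<Sum>z\<in>X \<times> Y. addchar p (system_phase p n Ms a b c (fst t) (fst (snd t)) (snd (snd t)) (fst z) (snd z)))" for t
  have "(of_nat N :: complex) * of_nat p ^ (3 * ?q) = (\<Sum>t\<in>?V3. T t)"
    unfolding N_def T_def X_def Y_def by (rule card_quad_system_char_sum[OF p_pos]) simp
  also have "\<dots> = T ?t0 + (\<Sum>t\<in>?V3 - {?t0}. T t)"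
    using p_pos by (intro sum.remove) simp_all
  also have "T ?t0 = of_nat (card X * card Y)"
    unfolding T_def by (simp add: system_phase_def lform_def vzero_def card_cartesian_product)
  finally have eq: "(of_nat N :: complex) * of_nat p ^ (3 * ?q) - of_nat (card X * card Y) = (\<Sum>t\<in>?V3 - {?t0}. T t)"
    by simp
  have "cmod (T t) \<le> ?E" if "t \<in> ?V3 - {?t0}" for t
    using that unfolding T_def X_def Y_def by (intro norm_system_char_sum_le[OF p sym]) auto
  hence "cmod (\<Sum>t\<in>?V3 - {?t0}. T t) \<le> real (card (?V3 - {?t0})) * ?E"
    using norm_sum[of T "?V3 - {?t0}"] sum_mono[of "?V3 - {?t0}" "\<lambda>t. cmod (T t)" "\<lambda>_. ?E"] by simp
  also have "\<dots> \<le> real p ^ (3 * ?q) * ?E"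
  proof -
    have "card (?V3 - {?t0}) \<le> p ^ (3 * ?q)"
      using card_Diff1_le[of ?V3 ?t0] by (simp add: card_cartesian_product card_vecs numeral_3_eq_3 power_add)
    thus ?thesis by (intro mult_right_mono) (simp_all flip: of_nat_power)
  qed
  finally have "cmod (complex_of_real (real N * real p ^ (3 * ?q) - real (card X) * real (card Y)))
      \<le> real p ^ (3 * ?q) * ?E"
    unfolding eq[symmetric] by simp
  hence "real p ^ (3 * ?q) * \<bar>real N - real (card X) * real (card Y) / real p ^ (3 * ?q)\<bar> \<le> real p ^ (3 * ?q) * ?E"
    using p_pos by (simp only: norm_of_real) (simp add: field_simps abs_mult[symmetric])
  thus ?thesis using p_pos by simp
qed

definition lin_eqs :: "nat \<Rightarrow> nat \<Rightarrow> (nat \<Rightarrow> int) list \<Rightarrow> (nat \<Rightarrow> int) \<Rightarrow> int list \<Rightarrow> bool" where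
  "lin_eqs p n Ls x u \<longleftrightarrow> (\<forall>j<length Ls. int p dvd lform n (Ls ! j) x - u ! j)"

definition quad_eqs :: "nat \<Rightarrow> nat \<Rightarrow> (nat \<Rightarrow> nat \<Rightarrow> int) list \<Rightarrow> (nat \<Rightarrow> int) \<Rightarrow> (nat \<Rightarrow> int) \<Rightarrow> int list \<Rightarrow> bool" where
  "quad_eqs p n Ms x y u \<longleftrightarrow> (\<forall>k<length Ms. int p dvd bform n (Ms ! k) x y - u ! k)"

lemma map_mod_eq_iff:
  assumes "p > 0" "fvec p (length L) u"
  shows "map (\<lambda>r. F r mod int p) L = u \<longleftrightarrow> (\<forall>j<length L. int p dvd F (L ! j) - u ! j)"
proof -
  have len: "length u = length L" using assms(2) unfolding fvec_def by simp
  have "u ! j mod int p = u ! j" if "j < length L" for j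
    using assms(2) len that unfolding fvec_def by (metis Fp_mod nth_mem subsetD)
  hence "(F (L ! j) mod int p = u ! j) \<longleftrightarrow> int p dvd F (L ! j) - u ! j" if "j < length L" for j
    using that by (metis mod_eq_dvd_iff)
  thus ?thesis using len by (auto simp: list_eq_iff_nth_eq)
qed

lemma betaQ_eq_iff:
  assumes "p > 0" "fvec p (length Ms) u"
  shows "betaQ p n Ms x y = u \<longleftrightarrow> quad_eqs p n Ms x y u"
proof -
  have "betaQ p n Ms x y = map (\<lambda>M. bform n M x y mod int p) Ms"
    unfolding betaQ_def bil_eq_bform ..
  thus ?thesis using map_mod_eq_iff[OF assms, of "\<lambda>M. bform n M x y"] unfolding quad_eqs_def by simp
qed

lemma betaB_eq_iff:
  assumes "p > 0" "fvec p (length Ls) (fst d)" "fvec p (length Ms) (snd d)"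
  shows "betaB p n Ls Ms x = d \<longleftrightarrow> lin_eqs p n Ls x (fst d) \<and> quad_eqs p n Ms x x (snd d)"
proof -
  have "betaL p n Ls x = map (\<lambda>r. lform n r x mod int p) Ls"
    unfolding betaL_def dotp_def lform_def by (simp add: mult.commute)
  hence "betaL p n Ls x = fst d \<longleftrightarrow> lin_eqs p n Ls x (fst d)"
    using map_mod_eq_iff[OF assms(1,2), of "\<lambda>r. lform n r x"] unfolding lin_eqs_def by simp
  moreover have "betaB p n Ls Ms x = d \<longleftrightarrow> betaL p n Ls x = fst d \<and> betaQ p n Ms x x = snd d"
    unfolding betaB_def by (cases d) auto
  ultimately show ?thesis
    using betaQ_eq_iff[OF assms(1,3)] by simp
qed

lemma lin_eqs_vcong: "vcong p n x x' \<Longrightarrow> lin_eqs p n Ls x u \<longleftrightarrow> lin_eqs p n Ls x' u"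
  unfolding lin_eqs_def using dvd_diff_mod_cong[OF lform_vcong] by blast

lemma quad_eqs_vcong:
  "vcong p n x x' \<Longrightarrow> vcong p n y y' \<Longrightarrow> quad_eqs p n Ms x y u \<longleftrightarrow> quad_eqs p n Ms x' y' u"
  unfolding quad_eqs_def using dvd_diff_mod_cong[OF bform_vcong] by blast

lemma dvd_eq_trans: "(m::int) dvd u \<Longrightarrow> u = x \<Longrightarrow> m dvd x"
  by simp

text \<open>The 18 quadratic conditions on the vertices x, x + h_a, y, y + h_b, z, z + h_c
  (with z = w - x - y) in terms of the values of one symmetric form: xx = M(x, x),
  xa = M(x, h_a), wa = M(w, h_a), aa = M(h_a, h_a), hab = M(h_a, h_b) and so on.
  Given the Omega conditions on w, h_a, h_b, h_c and the Sigma relation between the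
  targets, they are equivalent to 11 conditions that are linear in x and y apart
  from xx, yy, xy.\<close>
lemma quad_conditions_equiv:
  fixes xx yy xy xw yw xa xb xc ya yb yc ww wa wb wc aa bb cc hab hac hbc ta tb tc tab tac tbc te :: int
  assumes pr: "prime p" "odd p"
    and hW: "int p dvd ww - te" and hE: "int p dvd te - (ta + tb + tc + 2 * tab + 2 * tac + 2 * tbc)"
    and ha: "int p dvd 2 * wa + aa" and hb: "int p dvd 2 * wb + bb" and hc: "int p dvd 2 * wc + cc"
    and hab: "int p dvd hab" and hac: "int p dvd hac" and hbc: "int p dvd hbc"
  shows "(int p dvd xx - ta \<and> int p dvd xx + 2 * xa + aa - ta \<and> int p dvd yy - tb \<and> int p dvd yy + 2 * yb + bb - tb \<and>
          int p dvd ww + xx + yy - 2 * xw - 2 * yw + 2 * xy - tc \<and>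
          int p dvd ww + xx + yy - 2 * xw - 2 * yw + 2 * xy + 2 * wc - 2 * xc - 2 * yc + cc - tc \<and>
          int p dvd xy - tab \<and> int p dvd xy + xb - tab \<and> int p dvd xy + ya - tab \<and> int p dvd xy + xb + ya + hab - tab \<and>
          int p dvd xw - xx - xy - tac \<and> int p dvd xw - xx - xy + xc - tac \<and>
          int p dvd xw - xx - xy + wa - xa - ya - tac \<and> int p dvd xw - xx - xy + wa - xa - ya + xc + hac - tac \<and>
          int p dvd yw - xy - yy - tbc \<and> int p dvd yw - xy - yy + yc - tbc \<and>
          int p dvd yw - xy - yy + wb - xb - yb - tbc \<and> int p dvd yw - xy - yy + wb - xb - yb + yc + hbc - tbc)
     \<longleftrightarrow>
         (int p dvd xx - ta \<and> int p dvd yy - tb \<and> int p dvd xy - tab \<and> int p dvd xw - (tac + ta + tab) \<and>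
          int p dvd 2 * xa + aa \<and> int p dvd xb \<and> int p dvd xc \<and>
          int p dvd yw - (tbc + tb + tab) \<and> int p dvd 2 * yb + bb \<and> int p dvd ya \<and> int p dvd yc)"
    (is "?L \<longleftrightarrow> ?R")
proof
  assume L: ?L
  hence k1: "int p dvd xx - ta" and k2: "int p dvd xx + 2 * xa + aa - ta" and k3: "int p dvd yy - tb"
    and k4: "int p dvd yy + 2 * yb + bb - tb"
    and k7: "int p dvd xy - tab" and k8: "int p dvd xy + xb - tab" and k9: "int p dvd xy + ya - tab"
    and k11: "int p dvd xw - xx - xy - tac" and k12: "int p dvd xw - xx - xy + xc - tac"
    and k15: "int p dvd yw - xy - yy - tbc" and k16: "int p dvd yw - xy - yy + yc - tbc"
    by auto
  show ?R
  proof (intro conjI)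
    show "int p dvd xw - (tac + ta + tab)" by (rule dvd_eq_trans[OF dvd_add[OF dvd_add[OF k11 k1] k7]]) linarith
    show "int p dvd 2 * xa + aa" by (rule dvd_eq_trans[OF dvd_diff[OF k2 k1]]) linarith
    show "int p dvd xb" by (rule dvd_eq_trans[OF dvd_diff[OF k8 k7]]) linarith
    show "int p dvd xc" by (rule dvd_eq_trans[OF dvd_diff[OF k12 k11]]) linarith
    show "int p dvd yw - (tbc + tb + tab)" by (rule dvd_eq_trans[OF dvd_add[OF dvd_add[OF k15 k3] k7]]) linarith
    show "int p dvd 2 * yb + bb" by (rule dvd_eq_trans[OF dvd_diff[OF k4 k3]]) linarith
    show "int p dvd ya" by (rule dvd_eq_trans[OF dvd_diff[OF k9 k7]]) linarith
    show "int p dvd yc" by (rule dvd_eq_trans[OF dvd_diff[OF k16 k15]]) linarith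
  qed fact+
next
  assume R: ?R
  hence r1: "int p dvd xx - ta" and r2: "int p dvd yy - tb" and r3: "int p dvd xy - tab"
    and r4: "int p dvd xw - (tac + ta + tab)" and r5: "int p dvd 2 * xa + aa" and r6: "int p dvd xb"
    and r7: "int p dvd xc" and r8: "int p dvd yw - (tbc + tb + tab)" and r9: "int p dvd 2 * yb + bb"
    and r10: "int p dvd ya" and r11: "int p dvd yc"
    by auto
  \<comment> \<open>p is odd, so 2 wa + aa and 2 xa + aa both vanishing forces wa = xa mod p\<close>
  have wa: "int p dvd wa - xa"
    by (rule odd_prime_dvd_double[OF pr], rule dvd_eq_trans[OF dvd_diff[OF ha r5]]) (simp add: algebra_simps)
  have wb: "int p dvd wb - yb"
    by (rule odd_prime_dvd_double[OF pr], rule dvd_eq_trans[OF dvd_diff[OF hb r9]]) (simp add: algebra_simps)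
  have k5: "int p dvd ww + xx + yy - 2 * xw - 2 * yw + 2 * xy - tc"
    by (rule dvd_eq_trans[OF dvd_add[OF dvd_diff[OF dvd_diff[OF dvd_add[OF dvd_add[OF dvd_add[OF hW hE] r1] r2]
          dvd_mult[OF r4, of 2]] dvd_mult[OF r8, of 2]] dvd_mult[OF r3, of 2]]]) (simp add: algebra_simps)
  have k11: "int p dvd xw - xx - xy - tac" by (rule dvd_eq_trans[OF dvd_diff[OF dvd_diff[OF r4 r1] r3]]) linarith
  have k13: "int p dvd xw - xx - xy + wa - xa - ya - tac"
    by (rule dvd_eq_trans[OF dvd_diff[OF dvd_add[OF k11 wa] r10]]) linarith
  have k15: "int p dvd yw - xy - yy - tbc" by (rule dvd_eq_trans[OF dvd_diff[OF dvd_diff[OF r8 r3] r2]]) linarith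
  have k17: "int p dvd yw - xy - yy + wb - xb - yb - tbc"
    by (rule dvd_eq_trans[OF dvd_diff[OF dvd_add[OF k15 wb] r6]]) linarith
  show ?L
  proof (intro conjI)
    show "int p dvd xx + 2 * xa + aa - ta" by (rule dvd_eq_trans[OF dvd_add[OF r1 r5]]) linarith
    show "int p dvd yy + 2 * yb + bb - tb" by (rule dvd_eq_trans[OF dvd_add[OF r2 r9]]) linarith
    show "int p dvd ww + xx + yy - 2 * xw - 2 * yw + 2 * xy + 2 * wc - 2 * xc - 2 * yc + cc - tc"
      by (rule dvd_eq_trans[OF dvd_diff[OF dvd_diff[OF dvd_add[OF k5 hc] dvd_mult[OF r7, of 2]] dvd_mult[OF r11, of 2]]])
        (simp add: algebra_simps)
    show "int p dvd xy + xb - tab" by (rule dvd_eq_trans[OF dvd_add[OF r3 r6]]) linarith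
    show "int p dvd xy + ya - tab" by (rule dvd_eq_trans[OF dvd_add[OF r3 r10]]) linarith
    show "int p dvd xy + xb + ya + hab - tab"
      by (rule dvd_eq_trans[OF dvd_add[OF dvd_add[OF dvd_add[OF r3 r6] r10] hab]]) linarith
    show "int p dvd xw - xx - xy + xc - tac" by (rule dvd_eq_trans[OF dvd_add[OF k11 r7]]) linarith
    show "int p dvd xw - xx - xy + wa - xa - ya + xc + hac - tac"
      by (rule dvd_eq_trans[OF dvd_add[OF dvd_add[OF k13 r7] hac]]) linarith
    show "int p dvd yw - xy - yy + yc - tbc" by (rule dvd_eq_trans[OF dvd_add[OF k15 r11]]) linarith
    show "int p dvd yw - xy - yy + wb - xb - yb + yc + hbc - tbc"
      by (rule dvd_eq_trans[OF dvd_add[OF dvd_add[OF k17 r11] hbc]]) linarith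
  qed fact+
qed

definition lin_system :: "(nat \<Rightarrow> int) list \<Rightarrow> int list \<Rightarrow> ((nat \<Rightarrow> int) \<times> int) list" where
  "lin_system Ls u = map (\<lambda>j. (Ls ! j, - (u ! j))) [0..<length Ls]"

lemma map_fst_lin_system [simp]: "map fst (lin_system Ls u) = Ls"
  unfolding lin_system_def by (simp add: comp_def map_nth)

lemma lin_system_sat_iff:
  "(\<forall>(v, b)\<in>set (lin_system Ls u). int p dvd lform n v x + b) \<longleftrightarrow> lin_eqs p n Ls x u"
  unfolding lin_system_def lin_eqs_def by auto

lemma dvd_bil_iff: "int p dvd bil p n M x y - a \<longleftrightarrow> int p dvd bform n M x y - a"
  unfolding bil_eq_bform by (rule dvd_diff_mod_cong) simp

lemma card_product_ratio:
  fixes P cX cY :: real and k l m :: nat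
  assumes P: "P > 0" and X: "cX * P ^ l = P ^ k" and Y: "cY * P ^ l = P ^ k"
  shows "cX * cY / P ^ m = P powr (2 * real k - 2 * real l - real m)"
proof -
  have "cX * cY / P ^ m = P ^ k * P ^ k / (P ^ l * P ^ l * P ^ m)"
    using X Y P by (simp add: field_simps)
  also have "\<dots> = P powr ((real k + real k) - (real l + real l + real m))"
    by (simp only: powr_diff powr_add powr_realpow[OF P])
  finally show ?thesis by (simp add: algebra_simps)
qed

text \<open>With r \<ge> 22 (l + q + L) we have r / 2 \<ge> 2 l + 11 q + L, where P^L = 1/\<epsilon>.\<close>
lemma error_term_le:
  fixes P \<epsilon> :: real
  assumes P: "P > 1" and \<epsilon>: "0 < \<epsilon>" "\<epsilon> < 1"
    and r: "r \<ge> 22 * (l + q + log P (1 / \<epsilon>))" and lq: "l \<ge> 0" "q \<ge> 0"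
  shows "P powr (2 * n - r / 2) \<le> \<epsilon> * P powr (2 * n - 2 * l - 11 * q)"
proof -
  let ?L = "log P (1 / \<epsilon>)"
  have "?L > 0" using P \<epsilon> by simp
  have "P powr ?L = 1 / \<epsilon>"
    using P \<epsilon> by simp
  hence "\<epsilon> * P powr (2 * n - 2 * l - 11 * q) = P powr (2 * n - 2 * l - 11 * q - ?L)"
    unfolding powr_diff[of P "2 * n - 2 * l - 11 * q"] by simp
  moreover have "P powr (2 * n - r / 2) \<le> P powr (2 * n - 2 * l - 11 * q - ?L)"
    using r lq \<open>?L > 0\<close> P by (intro powr_mono) simp_all
  ultimately show ?thesis by simp
qed

section \<open>The fibre of Psi over a point of Omega\<close>

locale omega_fibre =
  fixes p n :: nat and Ls :: "(nat \<Rightarrow> int) list" and Ms :: "(nat \<Rightarrow> nat \<Rightarrow> int) list"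
    and da db dc e :: "int list \<times> int list" and dab dac dbc :: "int list"
    and w ha hb hc :: "nat \<Rightarrow> int"
  assumes prime: "prime p" and odd: "odd p"
    and qfac: "quad_factor p n Ms"
    and fe: "fvec p (length Ls) (fst e)" "fvec p (length Ms) (snd e)"
    and fda: "fvec p (length Ls) (fst da)" "fvec p (length Ms) (snd da)"
    and fdb: "fvec p (length Ls) (fst db)" "fvec p (length Ms) (snd db)"
    and fdc: "fvec p (length Ls) (fst dc)" "fvec p (length Ms) (snd dc)"
    and fdab: "fvec p (length Ms) dab" and fdac: "fvec p (length Ms) dac" and fdbc: "fvec p (length Ms) dbc"
    and sig: "Sigma_d p (length Ls) (da, db, dc, dab, dac, dbc) = e"
    and om: "(w, ha, hb, hc) \<in> Omega p n (atom p n Ls Ms e)"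
begin

lemma p_ge_2: "p \<ge> 2"
  using prime prime_ge_2_nat by blast

lemma p_pos: "p > 0"
  using p_ge_2 by simp

lemma in_vecs: "w \<in> vecs p n" "ha \<in> vecs p n" "hb \<in> vecs p n" "hc \<in> vecs p n"
  using om unfolding Omega_def by auto

lemma is_sym_Ms: "\<forall>M\<in>set Ms. is_sym M"
  using qfac unfolding quad_factor_def by blast

lemma cube_vertex:
  fixes b1 b2 b3 :: bool
  defines "P \<equiv> \<lambda>i. w i + (if b1 then ha i else 0) + (if b2 then hb i else 0) + (if b3 then hc i else 0)"
  shows "lin_eqs p n Ls P (fst e)" "quad_eqs p n Ms P P (snd e)"
proof -
  let ?Q = "vadd p (vadd p (vadd p w (sel b1 ha)) (sel b2 hb)) (sel b3 hc)"
  have "?Q \<in> atom p n Ls Ms e" using om unfolding Omega_def by auto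
  hence Q: "lin_eqs p n Ls ?Q (fst e)" "quad_eqs p n Ms ?Q ?Q (snd e)"
    unfolding atom_def betaB_eq_iff[OF p_pos fe] by auto
  have "sel b h = (\<lambda>i. if b then h i else 0)" for b h
    unfolding sel_def vzero_def by auto
  hence "vcong p n ?Q P" unfolding P_def by (simp add: vcong_add)
  thus "lin_eqs p n Ls P (fst e)" "quad_eqs p n Ms P P (snd e)"
    using Q lin_eqs_vcong quad_eqs_vcong by blast+
qed

lemma omega_lin:
  assumes j: "j < length Ls"
  shows "int p dvd lform n (Ls ! j) w - fst e ! j" "int p dvd lform n (Ls ! j) ha"
    "int p dvd lform n (Ls ! j) hb" "int p dvd lform n (Ls ! j) hc"
proof -
  let ?r = "Ls ! j"
  have vertex: "int p dvd lform n ?r (\<lambda>i. w i + (if b1 then ha i else 0) + (if b2 then hb i else 0)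
      + (if b3 then hc i else 0)) - fst e ! j" for b1 b2 b3
    using cube_vertex(1)[of b1 b2 b3] j unfolding lin_eqs_def by blast
  show w0: "int p dvd lform n ?r w - fst e ! j"
    using vertex[of False False False] by simp
  show "int p dvd lform n ?r ha"
    using dvd_diff[OF vertex[of True False False] w0] by (simp add: lform_add)
  show "int p dvd lform n ?r hb"
    using dvd_diff[OF vertex[of False True False] w0] by (simp add: lform_add)
  show "int p dvd lform n ?r hc"
    using dvd_diff[OF vertex[of False False True] w0] by (simp add: lform_add)
qed

lemma omega_quad:
  assumes k: "k < length Ms"
  defines "M \<equiv> Ms ! k"
  shows "int p dvd bform n M w w - snd e ! k"
    "int p dvd 2 * bform n M w ha + bform n M ha ha"
    "int p dvd 2 * bform n M w hb + bform n M hb hb"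
    "int p dvd 2 * bform n M w hc + bform n M hc hc"
    "int p dvd bform n M ha hb" "int p dvd bform n M ha hc" "int p dvd bform n M hb hc"
proof -
  have sym: "bform n M u v = bform n M v u" for u v
    using is_sym_Ms k unfolding M_def by (metis bform_commute nth_mem)
  note expand = bform_add_left bform_add_right sym[of ha w] sym[of hb w] sym[of hc w]
    sym[of hb ha] sym[of hc ha] sym[of hc hb]
  have vertex: "int p dvd bform n M (\<lambda>i. w i + (if b1 then ha i else 0) + (if b2 then hb i else 0) + (if b3 then hc i else 0))
      (\<lambda>i. w i + (if b1 then ha i else 0) + (if b2 then hb i else 0) + (if b3 then hc i else 0)) - snd e ! k"
    for b1 b2 b3
    using cube_vertex(2)[of b1 b2 b3] k unfolding quad_eqs_def M_def by blast
  have w0: "int p dvd bform n M w w - snd e ! k"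
    using vertex[of False False False] by simp
  have a0: "int p dvd bform n M (\<lambda>i. w i + ha i) (\<lambda>i. w i + ha i) - snd e ! k"
    using vertex[of True False False] by simp
  have b0: "int p dvd bform n M (\<lambda>i. w i + hb i) (\<lambda>i. w i + hb i) - snd e ! k"
    using vertex[of False True False] by simp
  have c0: "int p dvd bform n M (\<lambda>i. w i + hc i) (\<lambda>i. w i + hc i) - snd e ! k"
    using vertex[of False False True] by simp
  have ab0: "int p dvd bform n M (\<lambda>i. w i + ha i + hb i) (\<lambda>i. w i + ha i + hb i) - snd e ! k"
    using vertex[of True True False] by simp
  have ac0: "int p dvd bform n M (\<lambda>i. w i + ha i + hc i) (\<lambda>i. w i + ha i + hc i) - snd e ! k"
    using vertex[of True False True] by simp
  have bc0: "int p dvd bform n M (\<lambda>i. w i + hb i + hc i) (\<lambda>i. w i + hb i + hc i) - snd e ! k"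
    using vertex[of False True True] by simp
  show "int p dvd bform n M w w - snd e ! k" by (fact w0)
  show a: "int p dvd 2 * bform n M w ha + bform n M ha ha"
    by (rule dvd_eq_trans[OF dvd_diff[OF a0 w0]]) (simp add: expand)
  show b: "int p dvd 2 * bform n M w hb + bform n M hb hb"
    by (rule dvd_eq_trans[OF dvd_diff[OF b0 w0]]) (simp add: expand)
  show c: "int p dvd 2 * bform n M w hc + bform n M hc hc"
    by (rule dvd_eq_trans[OF dvd_diff[OF c0 w0]]) (simp add: expand)
  show "int p dvd bform n M ha hb"
    by (rule odd_prime_dvd_double[OF prime odd],
        rule dvd_eq_trans[OF dvd_diff[OF dvd_diff[OF dvd_diff[OF ab0 w0] a] b]]) (simp add: expand)
  show "int p dvd bform n M ha hc"
    by (rule odd_prime_dvd_double[OF prime odd],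
        rule dvd_eq_trans[OF dvd_diff[OF dvd_diff[OF dvd_diff[OF ac0 w0] a] c]]) (simp add: expand)
  show "int p dvd bform n M hb hc"
    by (rule odd_prime_dvd_double[OF prime odd],
        rule dvd_eq_trans[OF dvd_diff[OF dvd_diff[OF dvd_diff[OF bc0 w0] b] c]]) (simp add: expand)
qed

lemma Sigma_lin:
  assumes j: "j < length Ls"
  shows "int p dvd fst e ! j - (fst da ! j + fst db ! j + fst dc ! j)"
proof -
  have len: "length (fst da) = length Ls" "length (fst db) = length Ls" "length (fst dc) = length Ls"
    using fda fdb fdc unfolding fvec_def by auto
  have "fst e ! j mod int p = (fst da ! j + fst db ! j + fst dc ! j) mod int p"
    using sig[symmetric] j len
    by (simp add: Sigma_d_def padd_def twozero_def ladd_def mod_add_left_eq)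
  thus ?thesis by (simp add: mod_eq_dvd_iff)
qed

lemma Sigma_quad:
  assumes k: "k < length Ms"
  shows "int p dvd snd e ! k - (snd da ! k + snd db ! k + snd dc ! k + 2 * dab ! k + 2 * dac ! k + 2 * dbc ! k)"
proof -
  have len: "length (snd da) = length Ms" "length (snd db) = length Ms" "length (snd dc) = length Ms"
    "length dab = length Ms" "length dac = length Ms" "length dbc = length Ms"
    using fda fdb fdc fdab fdac fdbc unfolding fvec_def by auto
  have "snd e ! k mod int p
      = (snd da ! k + snd db ! k + snd dc ! k + 2 * dab ! k + 2 * dac ! k + 2 * dbc ! k) mod int p"
    using sig[symmetric] k len
    by (simp add: Sigma_d_def padd_def twozero_def ladd_def mod_add_left_eq mod_add_right_eq)
  thus ?thesis by (simp add: mod_eq_dvd_iff)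
qed

definition reduced_quad :: "nat \<Rightarrow> (nat \<Rightarrow> int) \<Rightarrow> (nat \<Rightarrow> int) \<Rightarrow> bool" where
  "reduced_quad k x y \<longleftrightarrow>
     int p dvd bform n (Ms ! k) x x - snd da ! k \<and> int p dvd bform n (Ms ! k) y y - snd db ! k \<and>
     int p dvd bform n (Ms ! k) x y - dab ! k \<and>
     int p dvd bform n (Ms ! k) x w - (dac ! k + snd da ! k + dab ! k) \<and>
     int p dvd 2 * bform n (Ms ! k) x ha + bform n (Ms ! k) ha ha \<and>
     int p dvd bform n (Ms ! k) x hb \<and> int p dvd bform n (Ms ! k) x hc \<and>
     int p dvd bform n (Ms ! k) y w - (dbc ! k + snd db ! k + dab ! k) \<and>
     int p dvd 2 * bform n (Ms ! k) y hb + bform n (Ms ! k) hb hb \<and>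
     int p dvd bform n (Ms ! k) y ha \<and> int p dvd bform n (Ms ! k) y hc"

lemma vertex_quad_conditions_iff:
  fixes x y :: "nat \<Rightarrow> int"
  assumes k: "k < length Ms"
  defines "M \<equiv> Ms ! k"
  defines "a \<equiv> snd da ! k" and "b \<equiv> snd db ! k" and "c \<equiv> snd dc ! k"
    and "ab \<equiv> dab ! k" and "ac \<equiv> dac ! k" and "bc \<equiv> dbc ! k"
  defines "x2 \<equiv> \<lambda>i. x i + ha i" and "y2 \<equiv> \<lambda>i. y i + hb i" and "z \<equiv> \<lambda>i. w i - x i - y i"
    and "z2 \<equiv> \<lambda>i. w i - x i - y i + hc i"
  shows "(int p dvd bform n M x x - a \<and> int p dvd bform n M x2 x2 - a \<and> int p dvd bform n M y y - b \<and>
          int p dvd bform n M y2 y2 - b \<and> int p dvd bform n M z z - c \<and> int p dvd bform n M z2 z2 - c \<and>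
          int p dvd bform n M x y - ab \<and> int p dvd bform n M x y2 - ab \<and> int p dvd bform n M x2 y - ab \<and>
          int p dvd bform n M x2 y2 - ab \<and> int p dvd bform n M x z - ac \<and> int p dvd bform n M x z2 - ac \<and>
          int p dvd bform n M x2 z - ac \<and> int p dvd bform n M x2 z2 - ac \<and> int p dvd bform n M y z - bc \<and>
          int p dvd bform n M y z2 - bc \<and> int p dvd bform n M y2 z - bc \<and> int p dvd bform n M y2 z2 - bc)
     \<longleftrightarrow> reduced_quad k x y"
proof -
  have sym: "bform n M u v = bform n M v u" for u v
    using is_sym_Ms k unfolding M_def by (metis bform_commute nth_mem)
  note ex = bform_add_left bform_add_right bform_diff_left bform_diff_right
    sym[of ha x] sym[of hb x] sym[of hc x] sym[of w x] sym[of y x] sym[of ha y] sym[of hb y] sym[of hc y]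
    sym[of w y] sym[of ha w] sym[of hb w] sym[of hc w] sym[of hb ha] sym[of hc ha] sym[of hc hb]
  let ?xx = "bform n M x x" and ?yy = "bform n M y y" and ?xy = "bform n M x y"
  let ?xw = "bform n M x w" and ?yw = "bform n M y w" and ?ww = "bform n M w w"
  let ?xa = "bform n M x ha" and ?xb = "bform n M x hb" and ?xc = "bform n M x hc"
  let ?ya = "bform n M y ha" and ?yb = "bform n M y hb" and ?yc = "bform n M y hc"
  let ?wa = "bform n M w ha" and ?wb = "bform n M w hb" and ?wc = "bform n M w hc"
  let ?aa = "bform n M ha ha" and ?bb = "bform n M hb hb" and ?cc = "bform n M hc hc"
  let ?hab = "bform n M ha hb" and ?hac = "bform n M ha hc" and ?hbc = "bform n M hb hc"
  have "bform n M x2 x2 = ?xx + 2 * ?xa + ?aa" "bform n M y2 y2 = ?yy + 2 * ?yb + ?bb"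
    "bform n M z z = ?ww + ?xx + ?yy - 2 * ?xw - 2 * ?yw + 2 * ?xy"
    "bform n M z2 z2 = ?ww + ?xx + ?yy - 2 * ?xw - 2 * ?yw + 2 * ?xy + 2 * ?wc - 2 * ?xc - 2 * ?yc + ?cc"
    "bform n M x y2 = ?xy + ?xb" "bform n M x2 y = ?xy + ?ya" "bform n M x2 y2 = ?xy + ?xb + ?ya + ?hab"
    "bform n M x z = ?xw - ?xx - ?xy" "bform n M x z2 = ?xw - ?xx - ?xy + ?xc"
    "bform n M x2 z = ?xw - ?xx - ?xy + ?wa - ?xa - ?ya"
    "bform n M x2 z2 = ?xw - ?xx - ?xy + ?wa - ?xa - ?ya + ?xc + ?hac"
    "bform n M y z = ?yw - ?xy - ?yy" "bform n M y z2 = ?yw - ?xy - ?yy + ?yc"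
    "bform n M y2 z = ?yw - ?xy - ?yy + ?wb - ?xb - ?yb"
    "bform n M y2 z2 = ?yw - ?xy - ?yy + ?wb - ?xb - ?yb + ?yc + ?hbc"
    unfolding x2_def y2_def z_def z2_def by (simp_all only: ex; linarith)+
  moreover note omega_quad[OF k] Sigma_quad[OF k]
  ultimately show ?thesis
    unfolding reduced_quad_def M_def a_def b_def c_def ab_def ac_def bc_def
    by (simp only: quad_conditions_equiv[OF prime odd])
qed

lemma lin_eqs_add:
  assumes "lin_eqs p n Ls u t" "\<And>j. j < length Ls \<Longrightarrow> int p dvd lform n (Ls ! j) h"
  shows "lin_eqs p n Ls (\<lambda>i. u i + h i) t"
  unfolding lin_eqs_def
proof (intro allI impI)
  fix j assume j: "j < length Ls"
  have "int p dvd (lform n (Ls ! j) u - t ! j) + lform n (Ls ! j) h"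
    using assms j unfolding lin_eqs_def by (simp add: dvd_add)
  thus "int p dvd lform n (Ls ! j) (\<lambda>i. u i + h i) - t ! j"
    by (simp add: lform_add algebra_simps)
qed

lemma lin_vertices_iff:
  "(lin_eqs p n Ls x (fst da) \<and> lin_eqs p n Ls (\<lambda>i. x i + ha i) (fst da) \<and>
    lin_eqs p n Ls y (fst db) \<and> lin_eqs p n Ls (\<lambda>i. y i + hb i) (fst db) \<and>
    lin_eqs p n Ls (\<lambda>i. w i - x i - y i) (fst dc) \<and> lin_eqs p n Ls (\<lambda>i. w i - x i - y i + hc i) (fst dc))
   \<longleftrightarrow> lin_eqs p n Ls x (fst da) \<and> lin_eqs p n Ls y (fst db)"
proof (intro iffI conjI)
  assume xy: "lin_eqs p n Ls x (fst da) \<and> lin_eqs p n Ls y (fst db)"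
  have "int p dvd lform n (Ls ! j) (\<lambda>i. w i - x i - y i) - fst dc ! j" if j: "j < length Ls" for j
  proof -
    have "int p dvd lform n (Ls ! j) x - fst da ! j" "int p dvd lform n (Ls ! j) y - fst db ! j"
      using xy j unfolding lin_eqs_def by auto
    thus ?thesis
      by (rule dvd_eq_trans[OF dvd_diff[OF dvd_diff[OF dvd_add[OF omega_lin(1)[OF j] Sigma_lin[OF j]]]]])
         (simp add: lform_diff)
  qed
  thus z: "lin_eqs p n Ls (\<lambda>i. w i - x i - y i) (fst dc)"
    unfolding lin_eqs_def by blast
  show "lin_eqs p n Ls (\<lambda>i. x i + ha i) (fst da)" "lin_eqs p n Ls (\<lambda>i. y i + hb i) (fst db)"
    "lin_eqs p n Ls (\<lambda>i. w i - x i - y i + hc i) (fst dc)"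
    using xy z by (auto intro!: lin_eqs_add omega_lin)
qed auto

definition fibre_point :: "(nat \<Rightarrow> int) \<Rightarrow> (nat \<Rightarrow> int) \<Rightarrow> vec6" where
  "fibre_point x y = (x, vadd p x ha, y, vadd p y hb, vsub p (vsub p w x) y, vadd p (vsub p (vsub p w x) y) hc)"

text \<open>The conditions defining K222 at the six vertices x, x + h_a, y, y + h_b, z, z + h_c
  of a point of the fibre, with z = w - x - y, stated for integer representatives.\<close>
definition vertex_eqs :: "(nat \<Rightarrow> int) \<Rightarrow> (nat \<Rightarrow> int) \<Rightarrow> bool" where
  "vertex_eqs x y \<longleftrightarrow>
     (lin_eqs p n Ls x (fst da) \<and> lin_eqs p n Ls (\<lambda>i. x i + ha i) (fst da) \<and>
      lin_eqs p n Ls y (fst db) \<and> lin_eqs p n Ls (\<lambda>i. y i + hb i) (fst db) \<and>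
      lin_eqs p n Ls (\<lambda>i. w i - x i - y i) (fst dc) \<and> lin_eqs p n Ls (\<lambda>i. w i - x i - y i + hc i) (fst dc)) \<and>
     (quad_eqs p n Ms x x (snd da) \<and> quad_eqs p n Ms (\<lambda>i. x i + ha i) (\<lambda>i. x i + ha i) (snd da) \<and>
      quad_eqs p n Ms y y (snd db) \<and> quad_eqs p n Ms (\<lambda>i. y i + hb i) (\<lambda>i. y i + hb i) (snd db) \<and>
      quad_eqs p n Ms (\<lambda>i. w i - x i - y i) (\<lambda>i. w i - x i - y i) (snd dc) \<and>
      quad_eqs p n Ms (\<lambda>i. w i - x i - y i + hc i) (\<lambda>i. w i - x i - y i + hc i) (snd dc) \<and>
      quad_eqs p n Ms x y dab \<and> quad_eqs p n Ms x (\<lambda>i. y i + hb i) dab \<and>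
      quad_eqs p n Ms (\<lambda>i. x i + ha i) y dab \<and> quad_eqs p n Ms (\<lambda>i. x i + ha i) (\<lambda>i. y i + hb i) dab \<and>
      quad_eqs p n Ms x (\<lambda>i. w i - x i - y i) dac \<and> quad_eqs p n Ms x (\<lambda>i. w i - x i - y i + hc i) dac \<and>
      quad_eqs p n Ms (\<lambda>i. x i + ha i) (\<lambda>i. w i - x i - y i) dac \<and>
      quad_eqs p n Ms (\<lambda>i. x i + ha i) (\<lambda>i. w i - x i - y i + hc i) dac \<and>
      quad_eqs p n Ms y (\<lambda>i. w i - x i - y i) dbc \<and> quad_eqs p n Ms y (\<lambda>i. w i - x i - y i + hc i) dbc \<and>
      quad_eqs p n Ms (\<lambda>i. y i + hb i) (\<lambda>i. w i - x i - y i) dbc \<and>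
      quad_eqs p n Ms (\<lambda>i. y i + hb i) (\<lambda>i. w i - x i - y i + hc i) dbc)"

lemma vertex_eqs_iff:
  "vertex_eqs x y \<longleftrightarrow> lin_eqs p n Ls x (fst da) \<and> lin_eqs p n Ls y (fst db) \<and> (\<forall>k<length Ms. reduced_quad k x y)"
  unfolding vertex_eqs_def lin_vertices_iff quad_eqs_def
  by (auto dest: vertex_quad_conditions_iff[THEN iffD2] intro: vertex_quad_conditions_iff[THEN iffD1])

lemma fibre_point_in_K222_iff:
  assumes x: "x \<in> vecs p n" and y: "y \<in> vecs p n"
  shows "fibre_point x y \<in> K222 p n Ls Ms (da, db, dc, dab, dac, dbc) \<longleftrightarrow> vertex_eqs x y"
proof -
  let ?vx2 = "vadd p x ha" and ?vy2 = "vadd p y hb" and ?vz = "vsub p (vsub p w x) y"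
    and ?vz2 = "vadd p (vsub p (vsub p w x) y) hc"
  have cx2: "vcong p n ?vx2 (\<lambda>i. x i + ha i)" and cy2: "vcong p n ?vy2 (\<lambda>i. y i + hb i)"
    and cz: "vcong p n ?vz (\<lambda>i. w i - x i - y i)" and cz2: "vcong p n ?vz2 (\<lambda>i. w i - x i - y i + hc i)"
    by (intro vcong_add vcong_diff vcong_refl)+
  have vs: "?vx2 \<in> vecs p n" "?vy2 \<in> vecs p n" "?vz \<in> vecs p n" "?vz2 \<in> vecs p n"
    using x y in_vecs p_pos by (simp_all add: vadd_in_vecs vsub_in_vecs)
  note bB = betaB_eq_iff[OF p_pos fda] betaB_eq_iff[OF p_pos fdb] betaB_eq_iff[OF p_pos fdc]
  note bQ = betaQ_eq_iff[OF p_pos fdab] betaQ_eq_iff[OF p_pos fdac] betaQ_eq_iff[OF p_pos fdbc]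
  note cq = lin_eqs_vcong[OF cx2] lin_eqs_vcong[OF cy2] lin_eqs_vcong[OF cz] lin_eqs_vcong[OF cz2]
    quad_eqs_vcong[OF cx2 vcong_refl] quad_eqs_vcong[OF cy2 vcong_refl] quad_eqs_vcong[OF cz vcong_refl]
    quad_eqs_vcong[OF cz2 vcong_refl] quad_eqs_vcong[OF vcong_refl cx2] quad_eqs_vcong[OF vcong_refl cy2]
    quad_eqs_vcong[OF vcong_refl cz] quad_eqs_vcong[OF vcong_refl cz2]
  show ?thesis
    unfolding K222_def fibre_point_def vertex_eqs_def using x y vs
    by (simp only: mem_Collect_eq prod.case ball_simps bB bQ cq simp_thms insert_iff empty_iff) blast
qed

lemma Psi_fibre_point:
  assumes x: "x \<in> vecs p n" and y: "y \<in> vecs p n"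
  shows "Psi p (fibre_point x y) = (w, ha, hb, hc)"
proof -
  let ?z = "vsub p (vsub p w x) y"
  have z: "?z \<in> vecs p n" using x y in_vecs p_pos by (simp add: vsub_in_vecs)
  have "vcong p n (vadd p (vadd p x y) ?z) (\<lambda>i. (x i + y i) + ((w i - x i) - y i))"
    by (intro vcong_add vcong_diff vcong_refl)
  hence "vadd p (vadd p x y) ?z = w"
    using x y z in_vecs p_pos by (intro vecs_eq_if_vcong) (simp_all add: vadd_in_vecs)
  moreover have "vsub p (vadd p u h) u = h" if "u \<in> vecs p n" "h \<in> vecs p n" for u h
  proof -
    have "vcong p n (vsub p (vadd p u h) u) (\<lambda>i. (u i + h i) - u i)"
      by (intro vcong_add vcong_diff vcong_refl)
    thus ?thesis using that p_pos by (intro vecs_eq_if_vcong) (simp_all add: vadd_in_vecs vsub_in_vecs)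
  qed
  ultimately show ?thesis
    unfolding fibre_point_def Psi_def using x y z in_vecs by simp
qed

lemma fibre_point_cases:
  assumes t: "Psi p t = (w, ha, hb, hc)" "t \<in> K222 p n Ls Ms (da, db, dc, dab, dac, dbc)"
  obtains x y where "x \<in> vecs p n" "y \<in> vecs p n" "t = fibre_point x y"
proof -
  obtain x1 x2 y1 y2 z1 z2 where teq: "t = (x1, x2, y1, y2, z1, z2)" by (cases t) auto
  have v: "x1 \<in> vecs p n" "x2 \<in> vecs p n" "y1 \<in> vecs p n" "y2 \<in> vecs p n" "z1 \<in> vecs p n" "z2 \<in> vecs p n"
    using t(2) unfolding teq K222_def by auto
  have ps: "vadd p (vadd p x1 y1) z1 = w" "vsub p x2 x1 = ha" "vsub p y2 y1 = hb" "vsub p z2 z1 = hc"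
    using t(1) unfolding teq Psi_def by auto
  have shift: "u2 = vadd p u1 (vsub p u2 u1)" if "u1 \<in> vecs p n" "u2 \<in> vecs p n" for u1 u2
  proof -
    have "vcong p n (vadd p u1 (vsub p u2 u1)) (\<lambda>i. u1 i + (u2 i - u1 i))"
      by (intro vcong_add vcong_diff vcong_refl)
    hence "vcong p n u2 (vadd p u1 (vsub p u2 u1))" by (simp add: vcong_sym)
    moreover have "vadd p u1 (vsub p u2 u1) \<in> vecs p n"
      using that p_pos by (simp add: vadd_in_vecs vsub_in_vecs)
    ultimately show ?thesis
      using that(2) vecs_eq_if_vcong by blast
  qed
  have "vcong p n (vsub p (vsub p (vadd p (vadd p x1 y1) z1) x1) y1) (\<lambda>i. (x1 i + y1 i + z1 i) - x1 i - y1 i)"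
    by (intro vcong_add vcong_diff vcong_refl)
  hence "vcong p n z1 (vsub p (vsub p w x1) y1)"
    unfolding ps(1) by (simp add: vcong_sym)
  moreover have "vsub p (vsub p w x1) y1 \<in> vecs p n"
    using v in_vecs p_pos by (simp add: vsub_in_vecs)
  ultimately have "z1 = vsub p (vsub p w x1) y1"
    using v(5) vecs_eq_if_vcong by blast
  hence "t = fibre_point x1 y1"
    unfolding teq fibre_point_def using shift[OF v(1,2)] shift[OF v(3,4)] shift[OF v(5,6)] ps by simp
  thus ?thesis using that v by blast
qed

abbreviation fibre :: "vec6 set" where
  "fibre \<equiv> {t. Psi p t = (w, ha, hb, hc)} \<inter> K222 p n Ls Ms (da, db, dc, dab, dac, dbc)"

lemma card_fibre_eq_card_pairs:
  "card fibre = card {(x, y) \<in> vecs p n \<times> vecs p n.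
       lin_eqs p n Ls x (fst da) \<and> lin_eqs p n Ls y (fst db) \<and> (\<forall>k<length Ms. reduced_quad k x y)}"
    (is "card ?F = card ?R")
proof -
  have "?F = (\<lambda>(x, y). fibre_point x y) ` ?R"
  proof
    show "?F \<subseteq> (\<lambda>(x, y). fibre_point x y) ` ?R"
    proof
      fix t assume "t \<in> ?F"
      then obtain x y where "x \<in> vecs p n" "y \<in> vecs p n" "t = fibre_point x y" "t \<in> K222 p n Ls Ms (da, db, dc, dab, dac, dbc)"
        using fibre_point_cases by blast
      thus "t \<in> (\<lambda>(x, y). fibre_point x y) ` ?R"
        using fibre_point_in_K222_iff vertex_eqs_iff by blast
    qed
    show "(\<lambda>(x, y). fibre_point x y) ` ?R \<subseteq> ?F"
      using Psi_fibre_point fibre_point_in_K222_iff vertex_eqs_iff by auto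
  qed
  moreover have "inj_on (\<lambda>(x, y). fibre_point x y) ?R"
    by (rule inj_onI) (auto simp: fibre_point_def)
  ultimately show ?thesis by (simp add: card_image)
qed

text \<open>half is the inverse of 2 mod p.\<close>
definition half :: int where
  "half = (int p + 1) div 2"

lemma dvd_add_half_iff: "int p dvd X + half * Y \<longleftrightarrow> int p dvd 2 * X + Y"
proof -
  have "even (int p + 1)" using odd by simp
  hence "2 * half = int p + 1"
    unfolding half_def by (rule dvd_mult_div_cancel)
  hence eq: "2 * (X + half * Y) = (2 * X + Y) + int p * Y"
    by (simp add: algebra_simps)
  show ?thesis
  proof
    assume "int p dvd X + half * Y"
    hence "int p dvd 2 * (X + half * Y)" by (rule dvd_mult)
    thus "int p dvd 2 * X + Y" unfolding eq by (simp add: dvd_add_left_iff)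
  next
    assume "int p dvd 2 * X + Y"
    hence "int p dvd 2 * (X + half * Y)" unfolding eq by simp
    thus "int p dvd X + half * Y" by (rule odd_prime_dvd_double[OF prime odd])
  qed
qed

text \<open>The linear conditions on x = x1 (resp. y = y1) left by vertex_eqs_iff and reduced_quad,
  as affine systems whose left-hand sides form the family of the theorem's independence
  hypothesis.\<close>
definition x_system :: "((nat \<Rightarrow> int) \<times> int) list" where
  "x_system = lin_system Ls (fst da) @ concat (map (\<lambda>k.
     [(mvec p n (Ms ! k) w, - (dac ! k + snd da ! k + dab ! k)), (mvec p n (Ms ! k) ha, half * bform n (Ms ! k) ha ha),
      (mvec p n (Ms ! k) hb, 0), (mvec p n (Ms ! k) hc, 0)]) [0..<length Ms])"

definition y_system :: "((nat \<Rightarrow> int) \<times> int) list" where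
  "y_system = lin_system Ls (fst db) @ concat (map (\<lambda>k.
     [(mvec p n (Ms ! k) w, - (dbc ! k + snd db ! k + dab ! k)), (mvec p n (Ms ! k) ha, 0),
      (mvec p n (Ms ! k) hb, half * bform n (Ms ! k) hb hb), (mvec p n (Ms ! k) hc, 0)]) [0..<length Ms])"

abbreviation ext_factor :: "(nat \<Rightarrow> int) list" where
  "ext_factor \<equiv> Ls @ concat (map (\<lambda>M. [mvec p n M w, mvec p n M ha, mvec p n M hb, mvec p n M hc]) Ms)"

lemma map_fst_systems: "map fst x_system = ext_factor" "map fst y_system = ext_factor"
proof -
  let ?f = "\<lambda>M. [mvec p n M w, mvec p n M ha, mvec p n M hb, mvec p n M hc]"
  have "map (\<lambda>k. ?f (Ms ! k)) [0..<length Ms] = map ?f (map (\<lambda>k. Ms ! k) [0..<length Ms])"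
    by (simp only: map_map comp_def)
  also have "\<dots> = map ?f Ms"
    by (simp only: map_nth)
  finally have "map (\<lambda>k. ?f (Ms ! k)) [0..<length Ms] = map ?f Ms" .
  thus "map fst x_system = ext_factor" "map fst y_system = ext_factor"
    unfolding x_system_def y_system_def
    by (simp_all only: map_append map_fst_lin_system map_concat map_map comp_def list.map fst_conv)
qed

lemma length_systems: "length x_system = length Ls + 4 * length Ms" "length y_system = length Ls + 4 * length Ms"
  using arg_cong[OF map_fst_systems(1), of length] arg_cong[OF map_fst_systems(2), of length]
  by (simp_all add: length_concat comp_def sum_list_triv)

lemma dvd_lform_mvec_iff:
  "int p dvd lform n (mvec p n M v) x + c \<longleftrightarrow> int p dvd bform n M x v + c"
  "int p dvd lform n (mvec p n M v) x \<longleftrightarrow> int p dvd bform n M x v"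
   apply (rule dvd_add_mod_cong[OF lform_mvec])
  by (simp add: dvd_eq_mod_eq_0 lform_mvec)

lemma ball_set_concat_upt: "(\<forall>z\<in>set (concat (map f [0..<q])). P z) \<longleftrightarrow> (\<forall>k<q. \<forall>z\<in>set (f k). P z)"
  by auto

lemma mem_x_system_iff:
  "x \<in> affine_sol p n x_system \<longleftrightarrow> x \<in> vecs p n \<and> lin_eqs p n Ls x (fst da) \<and>
     (\<forall>k<length Ms. int p dvd bform n (Ms ! k) x w - (dac ! k + snd da ! k + dab ! k) \<and>
        int p dvd 2 * bform n (Ms ! k) x ha + bform n (Ms ! k) ha ha \<and>
        int p dvd bform n (Ms ! k) x hb \<and> int p dvd bform n (Ms ! k) x hc)"
proof -
  have "(\<forall>(v, b)\<in>set [(mvec p n (Ms ! k) w, - (dac ! k + snd da ! k + dab ! k)),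
        (mvec p n (Ms ! k) ha, half * bform n (Ms ! k) ha ha), (mvec p n (Ms ! k) hb, 0),
        (mvec p n (Ms ! k) hc, 0)]. int p dvd lform n v x + b)
    \<longleftrightarrow> int p dvd bform n (Ms ! k) x w - (dac ! k + snd da ! k + dab ! k) \<and>
        int p dvd 2 * bform n (Ms ! k) x ha + bform n (Ms ! k) ha ha \<and>
        int p dvd bform n (Ms ! k) x hb \<and> int p dvd bform n (Ms ! k) x hc" for k
    unfolding list.set ball_simps case_prod_conv dvd_add_half_iff
      dvd_add_mod_cong[OF mod_mult_cong[OF refl lform_mvec]] diff_conv_add_uminus
    by (simp only: dvd_lform_mvec_iff add_0_right simp_thms)
  thus ?thesis
    unfolding affine_sol_def x_system_def set_append ball_Un lin_system_sat_iff ball_set_concat_upt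
      mem_Collect_eq by blast
qed

lemma mem_y_system_iff:
  "y \<in> affine_sol p n y_system \<longleftrightarrow> y \<in> vecs p n \<and> lin_eqs p n Ls y (fst db) \<and>
     (\<forall>k<length Ms. int p dvd bform n (Ms ! k) y w - (dbc ! k + snd db ! k + dab ! k) \<and>
        int p dvd bform n (Ms ! k) y ha \<and>
        int p dvd 2 * bform n (Ms ! k) y hb + bform n (Ms ! k) hb hb \<and> int p dvd bform n (Ms ! k) y hc)"
proof -
  have "(\<forall>(v, b)\<in>set [(mvec p n (Ms ! k) w, - (dbc ! k + snd db ! k + dab ! k)), (mvec p n (Ms ! k) ha, 0),
        (mvec p n (Ms ! k) hb, half * bform n (Ms ! k) hb hb), (mvec p n (Ms ! k) hc, 0)].
        int p dvd lform n v y + b)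
    \<longleftrightarrow> int p dvd bform n (Ms ! k) y w - (dbc ! k + snd db ! k + dab ! k) \<and>
        int p dvd bform n (Ms ! k) y ha \<and>
        int p dvd 2 * bform n (Ms ! k) y hb + bform n (Ms ! k) hb hb \<and> int p dvd bform n (Ms ! k) y hc" for k
    unfolding list.set ball_simps case_prod_conv dvd_add_half_iff
      dvd_add_mod_cong[OF mod_mult_cong[OF refl lform_mvec]] diff_conv_add_uminus
    by (simp only: dvd_lform_mvec_iff add_0_right simp_thms)
  thus ?thesis
    unfolding affine_sol_def y_system_def set_append ball_Un lin_system_sat_iff ball_set_concat_upt
      mem_Collect_eq by blast
qed

abbreviation quad_sols :: "((nat \<Rightarrow> int) \<times> int) list \<Rightarrow> ((nat \<Rightarrow> int) \<times> int) list
    \<Rightarrow> ((nat \<Rightarrow> int) \<times> (nat \<Rightarrow> int)) set" where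
  "quad_sols sx sy \<equiv> {z \<in> affine_sol p n sx \<times> affine_sol p n sy. \<forall>k<length Ms.
      int p dvd bil p n (Ms ! k) (fst z) (fst z) - snd da ! k \<and>
      int p dvd bil p n (Ms ! k) (snd z) (snd z) - snd db ! k \<and> int p dvd bil p n (Ms ! k) (fst z) (snd z) - dab ! k}"

lemma card_fibre_eq_quad_sols: "card fibre = card (quad_sols x_system y_system)"
proof -
  have "{(x, y) \<in> vecs p n \<times> vecs p n.
       lin_eqs p n Ls x (fst da) \<and> lin_eqs p n Ls y (fst db) \<and> (\<forall>k<length Ms. reduced_quad k x y)}
      = quad_sols x_system y_system"
    unfolding reduced_quad_def dvd_bil_iff by (auto simp: mem_x_system_iff mem_y_system_iff)
  thus ?thesis unfolding card_fibre_eq_card_pairs by simp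
qed

lemma card_fibre_le: "card fibre \<le> card (quad_sols (lin_system Ls (fst da)) (lin_system Ls (fst db)))"
proof -
  have "affine_sol p n x_system \<subseteq> affine_sol p n (lin_system Ls (fst da))"
    "affine_sol p n y_system \<subseteq> affine_sol p n (lin_system Ls (fst db))"
    unfolding affine_sol_def using lin_system_sat_iff mem_x_system_iff mem_y_system_iff
    by (auto simp: affine_sol_def)
  hence "quad_sols x_system y_system \<subseteq> quad_sols (lin_system Ls (fst da)) (lin_system Ls (fst db))"
    by auto
  thus ?thesis unfolding card_fibre_eq_quad_sols by (intro card_mono) auto
qed

lemma card_quad_sols_estimate:
  assumes indep: "lin_indep p n (map fst sx)" "lin_indep p n (map fst sy)"
    and len: "length sx = k" "length sy = k"
  shows "\<bar>real (card (quad_sols sx sy)) - real p powr (2 * real n - 2 * real k - real (3 * length Ms))\<bar>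
         \<le> real p powr (2 * real n - real (qrank p n Ms) / 2)"
proof -
  have "real (card (affine_sol p n sx)) * real p ^ k = real p ^ n"
    "real (card (affine_sol p n sy)) * real p ^ k = real p ^ n"
    using card_affine_sol[OF p_pos indep(1)] card_affine_sol[OF p_pos indep(2)] len
    by (simp_all flip: of_nat_mult of_nat_power)
  hence "real (card (affine_sol p n sx)) * real (card (affine_sol p n sy)) / real p ^ (3 * length Ms)
      = real p powr (2 * real n - 2 * real k - real (3 * length Ms))"
    using p_pos by (intro card_product_ratio) simp_all
  thus ?thesis
    using card_quad_system_estimate[OF prime odd is_sym_Ms, of n sx sy] by simp
qed

lemma card_fibre_upper:
  assumes "linear_factor p n Ls"
  shows "real (card fibre) \<le> real p powr (2 * real n - 2 * real (length Ls) - real (3 * length Ms))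
    + real p powr (2 * real n - real (qrank p n Ms) / 2)"
proof -
  have "lin_indep p n (map fst (lin_system Ls u))" for u
    using assms unfolding linear_factor_def by simp
  hence "real (card (quad_sols (lin_system Ls (fst da)) (lin_system Ls (fst db))))
      \<le> real p powr (2 * real n - 2 * real (length Ls) - real (3 * length Ms))
        + real p powr (2 * real n - real (qrank p n Ms) / 2)"
    using card_quad_sols_estimate[of "lin_system Ls (fst da)" "lin_system Ls (fst db)" "length Ls"]
    by (simp add: lin_system_def abs_le_iff)
  thus ?thesis using card_fibre_le by (meson of_nat_le_iff order_trans)
qed

lemma card_fibre_estimate:
  assumes "lin_indep p n ext_factor"
  shows "\<bar>real (card fibre) - real p powr (2 * real n - 2 * real (length Ls) - real (11 * length Ms))\<bar>
         \<le> real p powr (2 * real n - real (qrank p n Ms) / 2)"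
  using card_quad_sols_estimate[of x_system y_system "length Ls + 4 * length Ms"] assms
  unfolding card_fibre_eq_quad_sols map_fst_systems length_systems by (simp add: algebra_simps)

lemma fibre_bounds:
  assumes \<epsilon>: "0 < \<epsilon>" "\<epsilon> < 1" and lf: "linear_factor p n Ls"
    and rk: "real (qrank p n Ms) \<ge> 22 * (real (length Ls) + real (length Ms) + log (real p) (1 / \<epsilon>))"
  shows "let N = real (card fibre); l = int (length Ls); q = int (length Ms) in
        N \<le> (1 + \<epsilon>) * real p powi (2 * int n - 2 * l - 3 * q) \<and>
        (lin_indep p n ext_factor
          \<longrightarrow> \<bar>N - real p powi (2 * int n - 2 * l - 11 * q)\<bar> \<le> \<epsilon> * real p powi (2 * int n - 2 * l - 11 * q))"
proof -
  let ?l = "real (length Ls)" and ?q = "real (length Ms)"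
  let ?E = "real p powr (2 * real n - real (qrank p n Ms) / 2)"
  have P: "real p > 1" using p_ge_2 by simp
  have powi: "real p powi m = real p powr real_of_int m" for m
    using p_pos by (simp add: powr_real_of_int')
  have E: "?E \<le> \<epsilon> * real p powr (2 * real n - 2 * ?l - 11 * ?q)"
    by (rule error_term_le[OF P \<epsilon> rk]) simp_all
  have mono: "real p powr (2 * real n - 2 * ?l - 11 * ?q) \<le> real p powr (2 * real n - 2 * ?l - 3 * ?q)"
    using P by (intro powr_mono) simp_all
  have "real (card fibre) \<le> real p powr (2 * real n - 2 * ?l - 3 * ?q) + ?E"
    using card_fibre_upper[OF lf] by simp
  also have "\<dots> \<le> (1 + \<epsilon>) * real p powr (2 * real n - 2 * ?l - 3 * ?q)"
    using E mono \<epsilon> by (simp add: algebra_simps) (meson mult_left_mono less_imp_le order_trans)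
  finally have upper: "real (card fibre) \<le> (1 + \<epsilon>) * real p powr (2 * real n - 2 * ?l - 3 * ?q)" .
  have "\<bar>real (card fibre) - real p powr (2 * real n - 2 * ?l - 11 * ?q)\<bar>
      \<le> \<epsilon> * real p powr (2 * real n - 2 * ?l - 11 * ?q)" if "lin_indep p n ext_factor"
    using card_fibre_estimate[OF that] E by simp
  with upper show ?thesis
    unfolding Let_def powi by simp
qed

end

theorem mainTheorem11:
  shows "\<exists>C::real. C > 0 \<and>
   (\<forall>(p::nat) (n::nat) (\<epsilon>::real) Ls Ms da db dc dab dac dbc e w ha hb hc.
      prime p \<and> odd p \<and> 0 < \<epsilon> \<and> \<epsilon> < 1 \<and>
      linear_factor p n Ls \<and> quad_factor p n Ms \<and>
      real (qrank p n Ms) \<ge> C * (real (length Ls) + real (length Ms) + log (real p) (1 / \<epsilon>)) \<and>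
      fvec p (length Ls) (fst e) \<and> fvec p (length Ms) (snd e) \<and>
      fvec p (length Ls) (fst da) \<and> fvec p (length Ms) (snd da) \<and>
      fvec p (length Ls) (fst db) \<and> fvec p (length Ms) (snd db) \<and>
      fvec p (length Ls) (fst dc) \<and> fvec p (length Ms) (snd dc) \<and>
      fvec p (length Ms) dab \<and> fvec p (length Ms) dac \<and> fvec p (length Ms) dbc \<and>
      Sigma_d p (length Ls) (da, db, dc, dab, dac, dbc) = e \<and>
      (w, ha, hb, hc) \<in> Omega p n (atom p n Ls Ms e)
    \<longrightarrow>
      (let N = real (card ({t. Psi p t = (w, ha, hb, hc)} \<inter> K222 p n Ls Ms (da, db, dc, dab, dac, dbc)));
           l = int (length Ls); q = int (length Ms) in
        N \<le> (1 + \<epsilon>) * real p powi (2 * int n - 2 * l - 3 * q) \<and>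
        (lin_indep p n (Ls @ concat (map (\<lambda>M. [mvec p n M w, mvec p n M ha, mvec p n M hb, mvec p n M hc]) Ms))
          \<longrightarrow> \<bar>N - real p powi (2 * int n - 2 * l - 11 * q)\<bar> \<le> \<epsilon> * real p powi (2 * int n - 2 * l - 11 * q))))"
  apply (intro exI[of _ 22] conjI allI impI, simp)
  apply (elim conjE)
  subgoal for p n \<epsilon> Ls Ms da db dc dab dac dbc e w ha hb hc
    by (rule omega_fibre.fibre_bounds[of p n Ls Ms da db dc e dab dac dbc w ha hb hc \<epsilon>])
       (simp_all add: omega_fibre_def)
  done

end
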